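(* Let $(M,\mathcal{X})\models\mathrm{RCA}_0$, let $\mathcal{U}$ be an ultrafilter on the Boolean algebra $\mathcal{X}$ all of whose elements are cofinal in $M$, and let $\mathcal{F}/\mathcal{U}$ be the (first-order part of the) second-order restricted ultrapower. If $(M,\mathcal{X})$ satisfies $\Sigma_n$-comprehension for some $n\in\mathbb{N}$, then $M\preccurlyeq_{\Sigma_{n+2}}\mathcal{F}/\mathcal{U}$, i.e. every first-order $\Sigma_{n+2}$ formula with parameters from $M$ has the same truth value in $M$ and in $\mathcal{F}/\mathcal{U}$.
   Context: $\mathrm{RCA}_0$ is the second-order system with Robinson arithmetic, $\Sigma^0_1$-induction and $\Delta^0_1$-comprehension. $(M,\mathcal{X})$ satisfies $\Sigma_n$-comprehension if every subset of $M$ defined by a first-order $\Sigma_n$ formula with parameters from $M$ belongs to $\mathcal{X}$. Second-order restricted ultrapower: let $\mathcal{F}$ be the set of all total functions $M\to M$ belonging to $\mathcal{X}$; for $f,g\in\mathcal{F}$ put $f\sim g$ iff $\{i\in M: f(i)=g(i)\}\in\mathcal{U}$; $\mathcal{F}/\mathcal{U}$ is the set of classes $[f]$, with $[f]+[g]=[f+g]$, $[f]\times[g]=[f\times g]$ (pointwise), $[f]<[g]$ iff $\{i: f(i)<g(i)\}\in\mathcal{U}$. $M$ embeds into $\mathcal{F}/\mathcal{U}$ via constant functions. *)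

theory Defs
  imports "HOL-Library.FuncSet"
begin

record 'a astr =
  carr :: "'a set"
  zr :: 'a
  on :: 'a
  pl :: "'a \<Rightarrow> 'a \<Rightarrow> 'a"
  tm :: "'a \<Rightarrow> 'a \<Rightarrow> 'a"
  ls :: "'a \<Rightarrow> 'a \<Rightarrow> bool"

datatype trm = Var nat | Zero | One | Plus trm trm | Times trm trm

datatype fm =
    Eq trm trm | Lt trm trm
  | Mem trm nat
  | Neg fm | Conj fm fm | Disj fm fm | Impl fm fm
  | Ex nat fm | All nat fm
  | BEx nat trm fm
  | BAll nat trm fm
  | SEx nat fm | SAll nat fm

fun ev :: "'a astr \<Rightarrow> (nat \<Rightarrow> 'a) \<Rightarrow> trm \<Rightarrow> 'a" where
  "ev M e (Var i) = e i"
| "ev M e Zero = zr M"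
| "ev M e One = on M"
| "ev M e (Plus s t) = pl M (ev M e s) (ev M e t)"
| "ev M e (Times s t) = tm M (ev M e s) (ev M e t)"

fun sat :: "'a astr \<Rightarrow> 'a set set \<Rightarrow> (nat \<Rightarrow> 'a) \<Rightarrow> (nat \<Rightarrow> 'a set) \<Rightarrow> fm \<Rightarrow> bool" where
  "sat M Xs e S (Eq s t) = (ev M e s = ev M e t)"
| "sat M Xs e S (Lt s t) = ls M (ev M e s) (ev M e t)"
| "sat M Xs e S (Mem t j) = (ev M e t \<in> S j)"
| "sat M Xs e S (Neg \<phi>) = (\<not> sat M Xs e S \<phi>)"
| "sat M Xs e S (Conj \<phi> \<psi>) = (sat M Xs e S \<phi> \<and> sat M Xs e S \<psi>)"
| "sat M Xs e S (Disj \<phi> \<psi>) = (sat M Xs e S \<phi> \<or> sat M Xs e S \<psi>)"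
| "sat M Xs e S (Impl \<phi> \<psi>) = (sat M Xs e S \<phi> \<longrightarrow> sat M Xs e S \<psi>)"
| "sat M Xs e S (Ex x \<phi>) = (\<exists>a\<in>carr M. sat M Xs (e(x := a)) S \<phi>)"
| "sat M Xs e S (All x \<phi>) = (\<forall>a\<in>carr M. sat M Xs (e(x := a)) S \<phi>)"
| "sat M Xs e S (BEx x t \<phi>) =
     (\<exists>a\<in>carr M. ls M a (ev M e t) \<and> sat M Xs (e(x := a)) S \<phi>)"
| "sat M Xs e S (BAll x t \<phi>) =
     (\<forall>a\<in>carr M. ls M a (ev M e t) \<longrightarrow> sat M Xs (e(x := a)) S \<phi>)"
| "sat M Xs e S (SEx j \<phi>) = (\<exists>A\<in>Xs. sat M Xs e (S(j := A)) \<phi>)"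
| "sat M Xs e S (SAll j \<phi>) = (\<forall>A\<in>Xs. sat M Xs e (S(j := A)) \<phi>)"

fun delta0 :: "fm \<Rightarrow> bool" where
  "delta0 (Eq s t) = True"
| "delta0 (Lt s t) = True"
| "delta0 (Mem t j) = True"
| "delta0 (Neg \<phi>) = delta0 \<phi>"
| "delta0 (Conj \<phi> \<psi>) = (delta0 \<phi> \<and> delta0 \<psi>)"
| "delta0 (Disj \<phi> \<psi>) = (delta0 \<phi> \<and> delta0 \<psi>)"
| "delta0 (Impl \<phi> \<psi>) = (delta0 \<phi> \<and> delta0 \<psi>)"
| "delta0 (BEx x t \<phi>) = delta0 \<phi>"
| "delta0 (BAll x t \<phi>) = delta0 \<phi>"
| "delta0 (Ex x \<phi>) = False"
| "delta0 (All x \<phi>) = False"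
| "delta0 (SEx j \<phi>) = False"
| "delta0 (SAll j \<phi>) = False"

text \<open>Sigma_n / Pi_n formulas (set parameters allowed as atoms, no set quantifiers):
  blocks of unbounded quantifiers in front of a Delta_0 matrix.\<close>
inductive sigma :: "nat \<Rightarrow> fm \<Rightarrow> bool" and pi :: "nat \<Rightarrow> fm \<Rightarrow> bool" where
  sigma0: "delta0 \<phi> \<Longrightarrow> sigma 0 \<phi>"
| pi0: "delta0 \<phi> \<Longrightarrow> pi 0 \<phi>"
| sigma_pi: "pi n \<phi> \<Longrightarrow> sigma (Suc n) \<phi>"
| sigma_ex: "sigma (Suc n) \<phi> \<Longrightarrow> sigma (Suc n) (Ex x \<phi>)"
| pi_sigma: "sigma n \<phi> \<Longrightarrow> pi (Suc n) \<phi>"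
| pi_all: "pi (Suc n) \<phi> \<Longrightarrow> pi (Suc n) (All x \<phi>)"

fun first_order :: "fm \<Rightarrow> bool" where
  "first_order (Eq s t) = True"
| "first_order (Lt s t) = True"
| "first_order (Mem t j) = False"
| "first_order (Neg \<phi>) = first_order \<phi>"
| "first_order (Conj \<phi> \<psi>) = (first_order \<phi> \<and> first_order \<psi>)"
| "first_order (Disj \<phi> \<psi>) = (first_order \<phi> \<and> first_order \<psi>)"
| "first_order (Impl \<phi> \<psi>) = (first_order \<phi> \<and> first_order \<psi>)"
| "first_order (BEx x t \<phi>) = first_order \<phi>"
| "first_order (BAll x t \<phi>) = first_order \<phi>"
| "first_order (Ex x \<phi>) = first_order \<phi>"
| "first_order (All x \<phi>) = first_order \<phi>"
| "first_order (SEx j \<phi>) = False"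
| "first_order (SAll j \<phi>) = False"

definition is_astr :: "'a astr \<Rightarrow> bool" where
  "is_astr M \<longleftrightarrow> zr M \<in> carr M \<and> on M \<in> carr M \<and>
     (\<forall>a\<in>carr M. \<forall>b\<in>carr M. pl M a b \<in> carr M \<and> tm M a b \<in> carr M)"

definition robinson :: "'a astr \<Rightarrow> bool" where
  "robinson M \<longleftrightarrow> (\<forall>x\<in>carr M. \<forall>y\<in>carr M.
      pl M x (on M) \<noteq> zr M
    \<and> (pl M x (on M) = pl M y (on M) \<longrightarrow> x = y)
    \<and> (x \<noteq> zr M \<longrightarrow> (\<exists>z\<in>carr M. x = pl M z (on M)))
    \<and> pl M x (zr M) = x
    \<and> pl M x (pl M y (on M)) = pl M (pl M x y) (on M)
    \<and> tm M x (zr M) = zr M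
    \<and> tm M x (pl M y (on M)) = pl M (tm M x y) x
    \<and> (ls M x y \<longleftrightarrow> (\<exists>z\<in>carr M. pl M x (pl M z (on M)) = y)))"

definition env_ok :: "'a astr \<Rightarrow> 'a set set \<Rightarrow> (nat \<Rightarrow> 'a) \<Rightarrow> (nat \<Rightarrow> 'a set) \<Rightarrow> bool" where
  "env_ok M Xs e S \<longleftrightarrow> (\<forall>v. e v \<in> carr M) \<and> (\<forall>j. S j \<in> Xs)"

definition sigma1_ind :: "'a astr \<Rightarrow> 'a set set \<Rightarrow> bool" where
  "sigma1_ind M Xs \<longleftrightarrow> (\<forall>\<phi> x e S. sigma 1 \<phi> \<and> env_ok M Xs e S \<and>
     sat M Xs (e(x := zr M)) S \<phi> \<and>
     (\<forall>a\<in>carr M. sat M Xs (e(x := a)) S \<phi> \<longrightarrow> sat M Xs (e(x := pl M a (on M))) S \<phi>)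
     \<longrightarrow> (\<forall>a\<in>carr M. sat M Xs (e(x := a)) S \<phi>))"

definition delta1_comp :: "'a astr \<Rightarrow> 'a set set \<Rightarrow> bool" where
  "delta1_comp M Xs \<longleftrightarrow> (\<forall>\<phi> \<psi> x e S. sigma 1 \<phi> \<and> pi 1 \<psi> \<and> env_ok M Xs e S \<and>
     (\<forall>a\<in>carr M. sat M Xs (e(x := a)) S \<phi> \<longleftrightarrow> sat M Xs (e(x := a)) S \<psi>)
     \<longrightarrow> {a\<in>carr M. sat M Xs (e(x := a)) S \<phi>} \<in> Xs)"

definition rca0 :: "'a astr \<Rightarrow> 'a set set \<Rightarrow> bool" where
  "rca0 M Xs \<longleftrightarrow> is_astr M \<and> Xs \<subseteq> Pow (carr M) \<and> robinson M \<and>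
     sigma1_ind M Xs \<and> delta1_comp M Xs"

definition sigma_comp :: "'a astr \<Rightarrow> 'a set set \<Rightarrow> nat \<Rightarrow> bool" where
  "sigma_comp M Xs n \<longleftrightarrow> (\<forall>\<phi> x e. sigma n \<phi> \<and> first_order \<phi> \<and> (\<forall>v. e v \<in> carr M)
     \<longrightarrow> {a\<in>carr M. sat M Xs (e(x := a)) (\<lambda>_. {}) \<phi>} \<in> Xs)"

definition ultrafilter_on :: "'a astr \<Rightarrow> 'a set set \<Rightarrow> 'a set set \<Rightarrow> bool" where
  "ultrafilter_on M Xs U \<longleftrightarrow> U \<subseteq> Xs \<and> carr M \<in> U \<and> {} \<notin> U \<and>
     (\<forall>A\<in>U. \<forall>B\<in>U. A \<inter> B \<in> U) \<and>
     (\<forall>A\<in>U. \<forall>B\<in>Xs. A \<subseteq> B \<longrightarrow> B \<in> U) \<and>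
     (\<forall>A\<in>Xs. A \<in> U \<or> carr M - A \<in> U)"

definition cofinal :: "'a astr \<Rightarrow> 'a set \<Rightarrow> bool" where
  "cofinal M A \<longleftrightarrow> (\<forall>a\<in>carr M. \<exists>b\<in>A. ls M a b)"

text \<open>Functions are coded in M as sets of pairs, with the RCA_0 pairing
  (i,j) = (i+j)*(i+j) + i.\<close>
definition pair_code :: "'a astr \<Rightarrow> 'a \<Rightarrow> 'a \<Rightarrow> 'a" where
  "pair_code M i j = pl M (tm M (pl M i j) (pl M i j)) i"

definition fun_code :: "'a astr \<Rightarrow> ('a \<Rightarrow> 'a) \<Rightarrow> 'a set" where
  "fun_code M f = {pair_code M i (f i) | i. i \<in> carr M}"

definition Fs :: "'a astr \<Rightarrow> 'a set set \<Rightarrow> ('a \<Rightarrow> 'a) set" where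
  "Fs M Xs = {f. f \<in> carr M \<rightarrow>\<^sub>E carr M \<and> fun_code M f \<in> Xs}"

definition ueq :: "'a astr \<Rightarrow> 'a set set \<Rightarrow> ('a \<Rightarrow> 'a) \<Rightarrow> ('a \<Rightarrow> 'a) \<Rightarrow> bool" where
  "ueq M U f g \<longleftrightarrow> {i\<in>carr M. f i = g i} \<in> U"

definition ucls :: "'a astr \<Rightarrow> 'a set set \<Rightarrow> 'a set set \<Rightarrow> ('a \<Rightarrow> 'a) \<Rightarrow> ('a \<Rightarrow> 'a) set" where
  "ucls M Xs U f = {g \<in> Fs M Xs. ueq M U f g}"

definition urep :: "('a \<Rightarrow> 'a) set \<Rightarrow> ('a \<Rightarrow> 'a)" where
  "urep C = (SOME f. f \<in> C)"

definition ultrapower :: "'a astr \<Rightarrow> 'a set set \<Rightarrow> 'a set set \<Rightarrow> ('a \<Rightarrow> 'a) set astr" where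
  "ultrapower M Xs U = \<lparr>
     carr = ucls M Xs U ` Fs M Xs,
     zr = ucls M Xs U (\<lambda>i\<in>carr M. zr M),
     on = ucls M Xs U (\<lambda>i\<in>carr M. on M),
     pl = (\<lambda>C D. ucls M Xs U (\<lambda>i\<in>carr M. pl M (urep C i) (urep D i))),
     tm = (\<lambda>C D. ucls M Xs U (\<lambda>i\<in>carr M. tm M (urep C i) (urep D i))),
     ls = (\<lambda>C D. {i\<in>carr M. ls M (urep C i) (urep D i)} \<in> U) \<rparr>"

definition uemb :: "'a astr \<Rightarrow> 'a set set \<Rightarrow> 'a set set \<Rightarrow> 'a \<Rightarrow> ('a \<Rightarrow> 'a) set" where
  "uemb M Xs U a = ucls M Xs U (\<lambda>i\<in>carr M. a)"

end

theory Submission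
  imports Defs
begin

text \<open>
  Call a formula Xs-definable if, along every tuple of functions in F, the set of coordinates at
  which it holds lies in Xs. Los's theorem holds for every formula all of whose subformulas are
  Xs-definable: in the existential step, Delta_1-comprehension turns a set in U of coordinates
  having witnesses into a least-witness function in F. Delta_0 formulas are Xs-definable by
  Delta_0-comprehension, applied to the set of codes of satisfying tuples and pulled back along
  the code of the tuple of functions; Sigma_n-comprehension does the same for Sigma_k and Pi_k
  formulas with k <= n. A Sigma_(n+2) formula has the form Ex xs. All ys. chi with chi in Sigma_n.
  Its existential block transfers upwards via constant functions and downwards via
  representatives. If All ys. chi holds in the ultrapower along a tuple of functions, it holds in M
  at some coordinate: otherwise least counterexample tuples would form functions in F along which
  chi fails on a set in U.
\<close>

section \<open>Syntax: free variables, quantifier blocks and prenex forms\<close>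

fun fvt :: "trm \<Rightarrow> nat set" where
  "fvt (Var i) = {i}"
| "fvt Zero = {}"
| "fvt One = {}"
| "fvt (Plus s t) = fvt s \<union> fvt t"
| "fvt (Times s t) = fvt s \<union> fvt t"

fun fv :: "fm \<Rightarrow> nat set" where
  "fv (Eq s t) = fvt s \<union> fvt t"
| "fv (Lt s t) = fvt s \<union> fvt t"
| "fv (Mem t j) = fvt t"
| "fv (Neg \<phi>) = fv \<phi>"
| "fv (Conj \<phi> \<psi>) = fv \<phi> \<union> fv \<psi>"
| "fv (Disj \<phi> \<psi>) = fv \<phi> \<union> fv \<psi>"
| "fv (Impl \<phi> \<psi>) = fv \<phi> \<union> fv \<psi>"
| "fv (Ex x \<phi>) = fv \<phi> - {x}"
| "fv (All x \<phi>) = fv \<phi> - {x}"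
| "fv (BEx x t \<phi>) = fvt t \<union> (fv \<phi> - {x})"
| "fv (BAll x t \<phi>) = fvt t \<union> (fv \<phi> - {x})"
| "fv (SEx j \<phi>) = fv \<phi>"
| "fv (SAll j \<phi>) = fv \<phi>"

fun prefix_vars :: "fm \<Rightarrow> nat set" where
  "prefix_vars (Ex x \<phi>) = insert x (prefix_vars \<phi>)"
| "prefix_vars (All x \<phi>) = insert x (prefix_vars \<phi>)"
| "prefix_vars _ = {}"

lemma finite_fvt [simp]: "finite (fvt t)"
  by (induction t) auto

lemma finite_fv [simp]: "finite (fv \<phi>)"
  by (induction \<phi>) auto

lemma finite_prefix_vars [simp]: "finite (prefix_vars \<phi>)"
  by (induction \<phi>) auto

lemma prefix_vars_fv_disjoint: "prefix_vars \<phi> \<inter> fv \<phi> = {}"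
  by (induction \<phi>) auto

lemma ev_cong: "(\<forall>v\<in>fvt t. e v = e' v) \<Longrightarrow> ev M e t = ev M e' t"
  by (induction t) auto

lemma sat_cong: "(\<forall>v\<in>fv \<phi>. e v = e' v) \<Longrightarrow> sat M Xs e S \<phi> = sat M Xs e' S \<phi>"
proof (induction \<phi> arbitrary: e e' S)
  case (Ex x \<phi>)
  have "sat M Xs (e(x := a)) S \<phi> = sat M Xs (e'(x := a)) S \<phi>" for a
    by (rule Ex.IH) (use Ex.prems in auto)
  then show ?case by simp
next
  case (All x \<phi>)
  have "sat M Xs (e(x := a)) S \<phi> = sat M Xs (e'(x := a)) S \<phi>" for a
    by (rule All.IH) (use All.prems in auto)
  then show ?case by simp
next
  case (BEx x t \<phi>)
  have "sat M Xs (e(x := a)) S \<phi> = sat M Xs (e'(x := a)) S \<phi>" for a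
    by (rule BEx.IH) (use BEx.prems in auto)
  then show ?case using ev_cong[of t e e' M] BEx.prems by simp
next
  case (BAll x t \<phi>)
  have "sat M Xs (e(x := a)) S \<phi> = sat M Xs (e'(x := a)) S \<phi>" for a
    by (rule BAll.IH) (use BAll.prems in auto)
  then show ?case using ev_cong[of t e e' M] BAll.prems by simp
next
  case (Eq s t)
  then show ?case using ev_cong[of s e e' M] ev_cong[of t e e' M] by simp
next
  case (Lt s t)
  then show ?case using ev_cong[of s e e' M] ev_cong[of t e e' M] by simp
next
  case (Mem t j)
  then show ?case using ev_cong[of t e e' M] by simp
next
  case (Neg \<phi>)
  then show ?case using Neg.IH[of e e' S] by simp
next
  case (Conj \<phi> \<psi>)
  show ?case using Conj.IH[of e e' S] Conj.prems by simp
next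
  case (Disj \<phi> \<psi>)
  show ?case using Disj.IH[of e e' S] Disj.prems by simp
next
  case (Impl \<phi> \<psi>)
  show ?case using Impl.IH[of e e' S] Impl.prems by simp
next
  case (SEx j \<phi>)
  show ?case by (simp only: sat.simps SEx.IH[OF SEx.prems[simplified]])
next
  case (SAll j \<phi>)
  show ?case by (simp only: sat.simps SAll.IH[OF SAll.prems[simplified]])
qed

lemma sat_first_order_sets: "first_order \<phi> \<Longrightarrow> sat M Xs e S \<phi> = sat M Xs e S' \<phi>"
  by (induction \<phi> arbitrary: e) auto

definition exblock :: "nat list \<Rightarrow> fm \<Rightarrow> fm" where
  "exblock xs \<phi> = foldr Ex xs \<phi>"

definition allblock :: "nat list \<Rightarrow> fm \<Rightarrow> fm" where
  "allblock xs \<phi> = foldr All xs \<phi>"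

definition bexblock :: "nat list \<Rightarrow> trm \<Rightarrow> fm \<Rightarrow> fm" where
  "bexblock xs t \<phi> = foldr (\<lambda>x. BEx x t) xs \<phi>"

lemma sat_exblock:
  "sat M Xs e S (exblock xs \<phi>) \<longleftrightarrow>
   (\<exists>e'. (\<forall>v\<in>set xs. e' v \<in> carr M) \<and> (\<forall>v. v \<notin> set xs \<longrightarrow> e' v = e v) \<and> sat M Xs e' S \<phi>)"
proof (induction xs arbitrary: e)
  case Nil
  then show ?case by (auto simp: exblock_def simp flip: fun_eq_iff)
next
  case (Cons x xs)
  show ?case (is "?lhs \<longleftrightarrow> ?rhs")
  proof
    assume ?lhs
    then obtain a e' where "a \<in> carr M" "\<forall>v\<in>set xs. e' v \<in> carr M"
      "\<forall>v. v \<notin> set xs \<longrightarrow> e' v = (e(x := a)) v" "sat M Xs e' S \<phi>"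
      by (auto simp: Cons.IH[unfolded exblock_def] exblock_def)
    then show ?rhs by (intro exI[of _ e']) (auto split: if_splits)
  next
    assume ?rhs
    then obtain e' where "\<forall>v\<in>set (x # xs). e' v \<in> carr M" "\<forall>v. v \<notin> set (x # xs) \<longrightarrow> e' v = e v"
      "sat M Xs e' S \<phi>"
      by blast
    then show ?lhs
      by (auto simp: Cons.IH[unfolded exblock_def] exblock_def intro!: bexI[of _ "e' x"] exI[of _ e'])
  qed
qed

lemma sat_allblock:
  "sat M Xs e S (allblock xs \<phi>) \<longleftrightarrow>
   (\<forall>e'. (\<forall>v\<in>set xs. e' v \<in> carr M) \<longrightarrow> (\<forall>v. v \<notin> set xs \<longrightarrow> e' v = e v) \<longrightarrow> sat M Xs e' S \<phi>)"
proof (induction xs arbitrary: e)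
  case Nil
  then show ?case by (auto simp: allblock_def simp flip: fun_eq_iff)
next
  case (Cons x xs)
  show ?case (is "?lhs \<longleftrightarrow> ?rhs")
  proof
    show ?rhs if ?lhs using that by (auto simp: Cons.IH[unfolded allblock_def] allblock_def)
    show ?lhs if ?rhs using that by (auto simp: Cons.IH[unfolded allblock_def] allblock_def)
  qed
qed

lemma sat_bexblock:
  assumes "set xs \<inter> fvt t = {}"
  shows "sat M Xs e S (bexblock xs t \<phi>) \<longleftrightarrow>
   (\<exists>e'. (\<forall>v\<in>set xs. e' v \<in> carr M \<and> ls M (e' v) (ev M e t)) \<and> (\<forall>v. v \<notin> set xs \<longrightarrow> e' v = e v)
        \<and> sat M Xs e' S \<phi>)"
  using assms
proof (induction xs arbitrary: e)
  case Nil
  then show ?case by (auto simp: bexblock_def simp flip: fun_eq_iff)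
next
  case (Cons x xs)
  have ev_upd: "ev M (e(x := a)) t = ev M e t" for a
    by (rule ev_cong) (use Cons.prems in auto)
  have IH: "sat M Xs (e(x := a)) S (bexblock xs t \<phi>) \<longleftrightarrow>
      (\<exists>e'. (\<forall>v\<in>set xs. e' v \<in> carr M \<and> ls M (e' v) (ev M e t))
        \<and> (\<forall>v. v \<notin> set xs \<longrightarrow> e' v = (e(x := a)) v) \<and> sat M Xs e' S \<phi>)" for a
    using Cons by (simp add: ev_upd)
  show ?case (is "?lhs \<longleftrightarrow> ?rhs")
  proof
    assume ?lhs
    then obtain a e' where "a \<in> carr M" "ls M a (ev M e t)"
      "\<forall>v\<in>set xs. e' v \<in> carr M \<and> ls M (e' v) (ev M e t)"
      "\<forall>v. v \<notin> set xs \<longrightarrow> e' v = (e(x := a)) v" "sat M Xs e' S \<phi>"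
      by (auto simp: IH[unfolded bexblock_def] bexblock_def)
    then show ?rhs by (intro exI[of _ e']) (auto split: if_splits)
  next
    assume ?rhs
    then obtain e' where "\<forall>v\<in>set (x # xs). e' v \<in> carr M \<and> ls M (e' v) (ev M e t)"
      "\<forall>v. v \<notin> set (x # xs) \<longrightarrow> e' v = e v" "sat M Xs e' S \<phi>"
      by blast
    then show ?lhs
      by (auto simp: IH[unfolded bexblock_def] bexblock_def intro!: bexI[of _ "e' x"] exI[of _ e'])
  qed
qed

lemma sat_bexblock_exblock:
  assumes "set xs \<inter> fvt t = {}"
    and "\<And>e'. \<forall>v\<in>set xs. e' v \<in> carr M \<Longrightarrow> \<forall>v. v \<notin> set xs \<longrightarrow> e' v = e v \<Longrightarrow> sat M Xs e' S \<phi> \<Longrightarrow>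
      \<forall>v\<in>set xs. ls M (e' v) (ev M e t)"
  shows "sat M Xs e S (bexblock xs t \<phi>) \<longleftrightarrow> sat M Xs e S (exblock xs \<phi>)"
  unfolding sat_bexblock[OF assms(1)] sat_exblock using assms(2) by blast

lemma first_order_exblock [simp]: "first_order (exblock xs \<phi>) = first_order \<phi>"
  by (induction xs) (auto simp: exblock_def)

lemma first_order_allblock [simp]: "first_order (allblock xs \<phi>) = first_order \<phi>"
  by (induction xs) (auto simp: allblock_def)

lemma delta0_bexblock: "delta0 \<phi> \<Longrightarrow> delta0 (bexblock xs t \<phi>)"
  by (induction xs) (auto simp: bexblock_def)

lemma sigma_exblock: "sigma (Suc k) \<phi> \<Longrightarrow> sigma (Suc k) (exblock xs \<phi>)"
  by (induction xs) (auto simp: exblock_def intro: sigma_ex)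

lemma delta0_sigma1: "delta0 \<phi> \<Longrightarrow> sigma (Suc 0) \<phi>"
  using sigma_pi[OF pi0] by simp

lemma delta0_pi1: "delta0 \<phi> \<Longrightarrow> pi (Suc 0) \<phi>"
  using pi_sigma[OF sigma0] by simp

lemma sigma_pi_Suc:
  "sigma k \<phi> \<Longrightarrow> sigma (Suc k) \<phi>"
  "pi k \<phi> \<Longrightarrow> pi (Suc k) \<phi>"
  by (induction rule: sigma_pi.inducts) (auto intro: sigma_pi.intros)

lemma sigma_mono: "sigma k \<phi> \<Longrightarrow> k \<le> m \<Longrightarrow> sigma m \<phi>"
  by (induction m) (auto simp: le_Suc_eq intro: sigma_pi_Suc)

lemma sigma0_delta0: "sigma 0 \<phi> \<Longrightarrow> delta0 \<phi>"
  by (cases rule: sigma.cases) auto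

lemma sigma_pi_block_form:
  "sigma m \<phi> \<Longrightarrow> m = Suc (Suc k) \<Longrightarrow> \<exists>xs \<psi>. \<phi> = exblock xs \<psi> \<and> pi (Suc k) \<psi>"
  "pi m \<phi> \<Longrightarrow> m = Suc k \<Longrightarrow> \<exists>xs \<psi>. \<phi> = allblock xs \<psi> \<and> sigma k \<psi>"
proof (induction arbitrary: k and k rule: sigma_pi.inducts)
  case (sigma_ex n \<phi> x)
  then obtain xs \<psi> where "\<phi> = exblock xs \<psi>" "pi (Suc k) \<psi>" by blast
  then show ?case by (intro exI[of _ "x # xs"] exI[of _ \<psi>]) (simp add: exblock_def)
next
  case (pi_all n \<phi> x)
  then obtain xs \<psi> where "\<phi> = allblock xs \<psi>" "sigma k \<psi>" by blast
  then show ?case by (intro exI[of _ "x # xs"] exI[of _ \<psi>]) (simp add: allblock_def)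
qed (auto intro!: exI[of _ "[]"] simp: exblock_def allblock_def)

fun push_conj :: "fm \<Rightarrow> fm \<Rightarrow> fm" where
  "push_conj d (Ex x \<phi>) = Ex x (push_conj d \<phi>)"
| "push_conj d (All x \<phi>) = All x (push_conj d \<phi>)"
| "push_conj d \<phi> = Conj d \<phi>"

lemma sat_push_conj:
  assumes "carr M \<noteq> {}" and "fv d \<inter> prefix_vars \<phi> = {}"
  shows "sat M Xs e S (push_conj d \<phi>) \<longleftrightarrow> sat M Xs e S d \<and> sat M Xs e S \<phi>"
  using assms(2)
proof (induction d \<phi> arbitrary: e rule: push_conj.induct)
  case (1 d x \<phi>)
  have "sat M Xs (e(x := a)) S d = sat M Xs e S d" for a
    by (rule sat_cong) (use 1(2) in auto)
  then show ?case using 1 by auto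
next
  case (2 d x \<phi>)
  have "sat M Xs (e(x := a)) S d = sat M Xs e S d" for a
    by (rule sat_cong) (use 2(2) in auto)
  then show ?case using 2 assms(1) by auto
qed auto

lemma push_conj_sigma_pi:
  "sigma k \<phi> \<Longrightarrow> delta0 d \<Longrightarrow> sigma k (push_conj d \<phi>)"
  "pi k \<phi> \<Longrightarrow> delta0 d \<Longrightarrow> pi k (push_conj d \<phi>)"
proof (induction rule: sigma_pi.inducts)
  case (sigma0 \<phi>)
  then show ?case by (cases \<phi>) (auto intro: sigma_pi.sigma0)
next
  case (pi0 \<phi>)
  then show ?case by (cases \<phi>) (auto intro: sigma_pi.pi0)
qed (auto intro: sigma_pi.intros)

lemma first_order_push_conj: "first_order d \<Longrightarrow> first_order \<phi> \<Longrightarrow> first_order (push_conj d \<phi>)"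
  by (induction d \<phi> rule: push_conj.induct) auto

fun dual :: "fm \<Rightarrow> fm" where
  "dual (Ex x \<phi>) = All x (dual \<phi>)"
| "dual (All x \<phi>) = Ex x (dual \<phi>)"
| "dual \<phi> = Neg \<phi>"

lemma sat_dual: "sat M Xs e S (dual \<phi>) \<longleftrightarrow> \<not> sat M Xs e S \<phi>"
  by (induction \<phi> arbitrary: e rule: dual.induct) auto

lemma first_order_dual [simp]: "first_order (dual \<phi>) = first_order \<phi>"
  by (induction \<phi> rule: dual.induct) auto

lemma dual_sigma_pi:
  "sigma k \<phi> \<Longrightarrow> pi k (dual \<phi>)"
  "pi k \<phi> \<Longrightarrow> sigma k (dual \<phi>)"
proof (induction rule: sigma_pi.inducts)
  case (sigma0 \<phi>)
  then show ?case by (cases \<phi>) (auto intro: sigma_pi.pi0)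
next
  case (pi0 \<phi>)
  then show ?case by (cases \<phi>) (auto intro: sigma_pi.sigma0)
qed (auto intro: sigma_pi.intros)

definition pair_tm :: "trm \<Rightarrow> trm \<Rightarrow> trm" where
  "pair_tm s t = Plus (Times (Plus s t) (Plus s t)) s"

lemma ev_pair_tm [simp]: "ev M e (pair_tm s t) = pair_code M (ev M e s) (ev M e t)"
  by (simp add: pair_tm_def pair_code_def)

lemma fvt_pair_tm [simp]: "fvt (pair_tm s t) = fvt s \<union> fvt t"
  by (auto simp: pair_tm_def)

fun tuple_tm :: "nat list \<Rightarrow> trm" where
  "tuple_tm [] = Zero"
| "tuple_tm (x # xs) = pair_tm (Var x) (tuple_tm xs)"

lemma fvt_tuple_tm [simp]: "fvt (tuple_tm xs) = set xs"
  by (induction xs) auto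

section \<open>Arithmetic and coded functions in models of RCA_0\<close>

text \<open>The induction and comprehension schemes of rca0 quantify over set parameters in Xs, so
  they are vacuous when Xs is empty.\<close>
locale rca0_model =
  fixes M :: "'a astr" and Xs :: "'a set set"
  assumes rca0: "rca0 M Xs"
    and Xs_nonempty: "Xs \<noteq> {}"
begin

abbreviation "C \<equiv> carr M"
abbreviation "add \<equiv> pl M"
abbreviation "mul \<equiv> tm M"
abbreviation "z0 \<equiv> zr M"
abbreviation "o1 \<equiv> on M"
abbreviation "lt \<equiv> ls M"

lemma zero_in_C [simp]: "z0 \<in> C"
  and one_in_C [simp]: "o1 \<in> C"
  and add_in_C [simp]: "a \<in> C \<Longrightarrow> b \<in> C \<Longrightarrow> add a b \<in> C"
  and mul_in_C [simp]: "a \<in> C \<Longrightarrow> b \<in> C \<Longrightarrow> mul a b \<in> C"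
  using rca0 by (auto simp: rca0_def is_astr_def)

lemma Xs_subset: "A \<in> Xs \<Longrightarrow> A \<subseteq> C"
  using rca0 by (auto simp: rca0_def)

lemma succ_ne_zero [simp]: "x \<in> C \<Longrightarrow> add x o1 \<noteq> z0"
  and succ_inject [simp]: "x \<in> C \<Longrightarrow> y \<in> C \<Longrightarrow> add x o1 = add y o1 \<longleftrightarrow> x = y"
  and nonzero_is_succ: "x \<in> C \<Longrightarrow> x \<noteq> z0 \<Longrightarrow> \<exists>z\<in>C. x = add z o1"
  and add_zero [simp]: "x \<in> C \<Longrightarrow> add x z0 = x"
  and add_succ: "x \<in> C \<Longrightarrow> y \<in> C \<Longrightarrow> add x (add y o1) = add (add x y) o1"
  and mul_zero [simp]: "x \<in> C \<Longrightarrow> mul x z0 = z0"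
  and mul_succ: "x \<in> C \<Longrightarrow> y \<in> C \<Longrightarrow> mul x (add y o1) = add (mul x y) x"
  and less_iff: "x \<in> C \<Longrightarrow> y \<in> C \<Longrightarrow> lt x y \<longleftrightarrow> (\<exists>z\<in>C. add x (add z o1) = y)"
  using rca0 unfolding rca0_def robinson_def by blast+

lemma sigma1_induct:
  assumes "sigma (Suc 0) \<phi>" "\<forall>v. e v \<in> C" "\<forall>j. S j \<in> Xs"
    and "\<And>a. a \<in> C \<Longrightarrow> sat M Xs (e(x := a)) S \<phi> \<longleftrightarrow> P a"
    and "P z0" "\<And>a. a \<in> C \<Longrightarrow> P a \<Longrightarrow> P (add a o1)" "a \<in> C"
  shows "P a"
proof -
  have "sigma1_ind M Xs"
    using rca0 by (simp add: rca0_def)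
  then have "\<forall>a\<in>C. sat M Xs (e(x := a)) S \<phi>"
    unfolding sigma1_ind_def by (elim allE[of _ \<phi>] allE[of _ x] allE[of _ e] allE[of _ S])
      (use assms(1-6) in \<open>auto simp: env_ok_def\<close>)
  then show ?thesis using assms(4,7) by auto
qed

lemma delta1_comprehension:
  assumes "sigma (Suc 0) \<phi>" "pi (Suc 0) \<psi>" "\<forall>v. e v \<in> C" "\<forall>j. S j \<in> Xs"
    and "\<And>a. a \<in> C \<Longrightarrow> sat M Xs (e(x := a)) S \<phi> \<longleftrightarrow> P a"
    and "\<And>a. a \<in> C \<Longrightarrow> sat M Xs (e(x := a)) S \<psi> \<longleftrightarrow> P a"
  shows "{a\<in>C. P a} \<in> Xs"
proof -
  have "delta1_comp M Xs"
    using rca0 by (simp add: rca0_def)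
  then have "{a\<in>C. sat M Xs (e(x := a)) S \<phi>} \<in> Xs"
    unfolding delta1_comp_def
    by (rule allE[of _ \<phi>], elim allE[of _ \<psi>] allE[of _ x] allE[of _ e] allE[of _ S])
      (use assms(1-6) in \<open>auto simp: env_ok_def\<close>)
  moreover have "{a\<in>C. sat M Xs (e(x := a)) S \<phi>} = {a\<in>C. P a}"
    using assms(5) by auto
  ultimately show ?thesis by simp
qed

lemma delta0_comprehension:
  assumes "delta0 \<phi>" "\<forall>v. e v \<in> C" "\<forall>j. S j \<in> Xs"
    and "\<And>a. a \<in> C \<Longrightarrow> sat M Xs (e(x := a)) S \<phi> \<longleftrightarrow> P a"
  shows "{a\<in>C. P a} \<in> Xs"
  by (rule delta1_comprehension[of \<phi> \<phi>]) (use assms in \<open>auto intro: delta0_sigma1 delta0_pi1\<close>)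

lemma C_in_Xs [simp]: "C \<in> Xs"
proof -
  obtain A where "A \<in> Xs" using Xs_nonempty by blast
  have "{a\<in>C. True} \<in> Xs"
    by (rule delta0_comprehension[where \<phi>="Eq Zero Zero" and e="\<lambda>_. z0" and S="\<lambda>_. A" and x=0
          and P="\<lambda>_. True"])
      (use \<open>A \<in> Xs\<close> in auto)
  then show ?thesis by simp
qed

lemma Int_in_Xs:
  assumes "A \<in> Xs" "B \<in> Xs"
  shows "A \<inter> B \<in> Xs"
proof -
  have "{a\<in>C. a \<in> A \<and> a \<in> B} \<in> Xs"
    by (rule delta0_comprehension[where \<phi>="Conj (Mem (Var 0) 0) (Mem (Var 0) 1)" and e="\<lambda>_. z0" and x=0
          and S="(\<lambda>_. C)(0 := A, 1 := B)"]) (use assms in auto)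
  moreover have "{a\<in>C. a \<in> A \<and> a \<in> B} = A \<inter> B"
    using assms Xs_subset by auto
  ultimately show ?thesis by simp
qed

lemma Collect_conj_in_Xs:
  assumes "{i\<in>C. P i} \<in> Xs" "{i\<in>C. Q i} \<in> Xs"
  shows "{i\<in>C. P i \<and> Q i} \<in> Xs"
proof -
  have "{i\<in>C. P i \<and> Q i} = {i\<in>C. P i} \<inter> {i\<in>C. Q i}" by auto
  then show ?thesis using Int_in_Xs[OF assms] by simp
qed

lemma Diff_in_Xs:
  assumes "A \<in> Xs"
  shows "C - A \<in> Xs"
proof -
  have "{a\<in>C. a \<notin> A} \<in> Xs"
    by (rule delta0_comprehension[where \<phi>="Neg (Mem (Var 0) 0)" and e="\<lambda>_. z0" and x=0
          and S="(\<lambda>_. C)(0 := A)"]) (use assms in auto)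
  then show ?thesis by (simp add: set_diff_eq)
qed

text \<open>Induction in M is available only through the Sigma_1 induction scheme, so each inductive
  proof below names the formula it inducts on.\<close>
lemma arith_induct:
  assumes "delta0 \<phi>" "\<forall>v. e v \<in> C"
    and "\<And>a. a \<in> C \<Longrightarrow> sat M Xs (e(0 := a)) (\<lambda>_. C) \<phi> \<longleftrightarrow> P a"
    and "P z0" "\<And>a. a \<in> C \<Longrightarrow> P a \<Longrightarrow> P (add a o1)" "a \<in> C"
  shows "P a"
  by (rule sigma1_induct[where S="\<lambda>_. C" and x=0 and \<phi>=\<phi> and e=e and P=P])
    (use assms in \<open>auto intro: delta0_sigma1\<close>)

lemma add_zero_left [simp]: "x \<in> C \<Longrightarrow> add z0 x = x"
  by (rule arith_induct[where \<phi>="Eq (Plus Zero (Var 0)) (Var 0)" and e="\<lambda>_. z0"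
        and P="\<lambda>x. add z0 x = x"])
     (auto simp: add_succ)

lemma add_succ_left: "x \<in> C \<Longrightarrow> y \<in> C \<Longrightarrow> add (add x o1) y = add (add x y) o1"
  by (rule arith_induct[where \<phi>="Eq (Plus (Plus (Var 1) One) (Var 0)) (Plus (Plus (Var 1) (Var 0)) One)"
        and e="(\<lambda>_. z0)(1 := x)" and P="\<lambda>y. add (add x o1) y = add (add x y) o1"])
     (auto simp: add_succ)

lemma add_comm: "x \<in> C \<Longrightarrow> y \<in> C \<Longrightarrow> add x y = add y x"
  by (rule arith_induct[where \<phi>="Eq (Plus (Var 1) (Var 0)) (Plus (Var 0) (Var 1))"
        and e="(\<lambda>_. z0)(1 := x)" and P="\<lambda>y. add x y = add y x"])
     (auto simp: add_succ add_succ_left)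

lemma add_assoc: "x \<in> C \<Longrightarrow> y \<in> C \<Longrightarrow> w \<in> C \<Longrightarrow> add (add x y) w = add x (add y w)"
  by (rule arith_induct[where
        \<phi>="Eq (Plus (Plus (Var 1) (Var 2)) (Var 0)) (Plus (Var 1) (Plus (Var 2) (Var 0)))"
        and e="(\<lambda>_. z0)(1 := x, 2 := y)" and P="\<lambda>w. add (add x y) w = add x (add y w)"])
     (auto simp: add_succ)

lemma add_left_commute: "x \<in> C \<Longrightarrow> y \<in> C \<Longrightarrow> w \<in> C \<Longrightarrow> add x (add y w) = add y (add x w)"
  by (metis add_assoc add_comm)

lemmas add_ac = add_assoc add_comm add_left_commute

lemma add_right_cancel: "x \<in> C \<Longrightarrow> y \<in> C \<Longrightarrow> w \<in> C \<Longrightarrow> add x w = add y w \<longleftrightarrow> x = y"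
proof -
  assume xy: "x \<in> C" "y \<in> C" "w \<in> C"
  have "add x w = add y w \<longrightarrow> x = y"
    by (rule arith_induct[where
          \<phi>="Impl (Eq (Plus (Var 1) (Var 0)) (Plus (Var 2) (Var 0))) (Eq (Var 1) (Var 2))"
        and e="(\<lambda>_. z0)(1 := x, 2 := y)" and P="\<lambda>w. add x w = add y w \<longrightarrow> x = y"])
     (use xy in \<open>auto simp: add_succ\<close>)
  then show ?thesis by auto
qed

lemma add_left_cancel: "x \<in> C \<Longrightarrow> y \<in> C \<Longrightarrow> w \<in> C \<Longrightarrow> add w x = add w y \<longleftrightarrow> x = y"
  using add_right_cancel add_comm by metis

lemma mul_zero_left [simp]: "x \<in> C \<Longrightarrow> mul z0 x = z0"
  by (rule arith_induct[where \<phi>="Eq (Times Zero (Var 0)) Zero" and e="\<lambda>_. z0"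
        and P="\<lambda>x. mul z0 x = z0"])
     (auto simp: mul_succ)

lemma mul_succ_left: "x \<in> C \<Longrightarrow> y \<in> C \<Longrightarrow> mul (add x o1) y = add (mul x y) y"
  by (rule arith_induct[where
        \<phi>="Eq (Times (Plus (Var 1) One) (Var 0)) (Plus (Times (Var 1) (Var 0)) (Var 0))"
        and e="(\<lambda>_. z0)(1 := x)" and P="\<lambda>y. mul (add x o1) y = add (mul x y) y"])
     (auto simp: mul_succ add_succ[symmetric] add_ac)

lemma mul_comm: "x \<in> C \<Longrightarrow> y \<in> C \<Longrightarrow> mul x y = mul y x"
  by (rule arith_induct[where \<phi>="Eq (Times (Var 1) (Var 0)) (Times (Var 0) (Var 1))"
        and e="(\<lambda>_. z0)(1 := x)" and P="\<lambda>y. mul x y = mul y x"])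
     (auto simp: mul_succ mul_succ_left)

lemma mul_add_distrib_left:
  assumes "x \<in> C" "y \<in> C" "w \<in> C"
  shows "mul x (add y w) = add (mul x y) (mul x w)"
proof (rule arith_induct[where
      \<phi>="Eq (Times (Var 1) (Plus (Var 2) (Var 0))) (Plus (Times (Var 1) (Var 2)) (Times (Var 1) (Var 0)))"
        and e="(\<lambda>_. z0)(1 := x, 2 := y)" and P="\<lambda>w. mul x (add y w) = add (mul x y) (mul x w)"])
  fix a assume a: "a \<in> C" and IH: "mul x (add y a) = add (mul x y) (mul x a)"
  have "mul x (add y (add a o1)) = mul x (add (add y a) o1)" using a assms by (simp add: add_succ)
  also have "\<dots> = add (mul x (add y a)) x" using a assms by (simp add: mul_succ)
  also have "\<dots> = add (add (mul x y) (mul x a)) x" using IH by simp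
  also have "\<dots> = add (mul x y) (add (mul x a) x)" using a assms by (simp add: add_assoc)
  also have "\<dots> = add (mul x y) (mul x (add a o1))" using a assms by (simp add: mul_succ)
  finally show "mul x (add y (add a o1)) = add (mul x y) (mul x (add a o1))" .
qed (use assms in \<open>auto\<close>)

lemma mul_add_distrib_right: "x \<in> C \<Longrightarrow> y \<in> C \<Longrightarrow> w \<in> C \<Longrightarrow> mul (add y w) x = add (mul y x) (mul w x)"
  using mul_add_distrib_left mul_comm by simp

lemma mul_one [simp]: "x \<in> C \<Longrightarrow> mul x o1 = x"
  using mul_succ[of x z0] by simp

definition le :: "'a \<Rightarrow> 'a \<Rightarrow> bool" where
  "le a b \<longleftrightarrow> (\<exists>z\<in>C. add a z = b)"

lemma less_succ_iff:
  assumes "a \<in> C" "b \<in> C"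
  shows "lt a (add b o1) \<longleftrightarrow> lt a b \<or> a = b"
proof
  assume "lt a (add b o1)"
  then obtain z where z: "z \<in> C" "add a (add z o1) = add b o1" using less_iff assms by auto
  then have "add a z = b" using assms by (simp add: add_succ)
  then show "lt a b \<or> a = b"
  proof (cases "z = z0")
    case False
    then obtain z' where "z' \<in> C" "z = add z' o1" using nonzero_is_succ z by auto
    then show ?thesis using \<open>add a z = b\<close> less_iff assms by auto
  qed (use assms in auto)
next
  assume "lt a b \<or> a = b"
  then show "lt a (add b o1)"
  proof
    assume "lt a b"
    then obtain z where z: "z \<in> C" "add a (add z o1) = b" using less_iff assms by auto
    then have "add a (add (add z o1) o1) = add b o1" using assms by (simp add: add_succ)
    then show ?thesis using less_iff assms z by auto
  next
    assume "a = b" then show ?thesis using less_iff assms by (auto intro!: bexI[of _ z0])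
  qed
qed

lemma not_less_zero [simp]: "a \<in> C \<Longrightarrow> \<not> lt a z0"
  using less_iff[of a z0] by (auto simp: add_succ)

lemma le_iff_less_succ: "a \<in> C \<Longrightarrow> b \<in> C \<Longrightarrow> le a b \<longleftrightarrow> lt a (add b o1)"
  unfolding le_def using less_iff[of a "add b o1"] by (auto simp: add_succ)

lemma less_linear:
  assumes "a \<in> C" "b \<in> C"
  shows "lt a b \<or> a = b \<or> lt b a"
proof (rule arith_induct[where
      \<phi>="Disj (Lt (Var 0) (Var 1)) (Disj (Eq (Var 0) (Var 1)) (Lt (Var 1) (Var 0)))"
        and e="(\<lambda>_. z0)(1 := b)" and P="\<lambda>a. lt a b \<or> a = b \<or> lt b a"])
  show "lt z0 b \<or> z0 = b \<or> lt b z0"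
  proof (cases "b = z0")
    case False
    then obtain z where "z \<in> C" "b = add z o1" using nonzero_is_succ assms by auto
    then show ?thesis using less_iff[of z0 b] assms by auto
  qed simp
next
  fix a assume a: "a \<in> C" and IH: "lt a b \<or> a = b \<or> lt b a"
  show "lt (add a o1) b \<or> add a o1 = b \<or> lt b (add a o1)"
  proof -
    { assume "lt a b"
      then obtain z where z: "z \<in> C" "add a (add z o1) = b" using less_iff assms a by auto
      have ?thesis
      proof (cases "z = z0")
        case True then show ?thesis using z a by simp
      next
        case False
        then obtain z' where z': "z' \<in> C" "z = add z' o1" using nonzero_is_succ z by auto
        have "add (add a o1) (add z' o1) = b" using z z' a by (simp add: add_ac)
        then show ?thesis using less_iff[of "add a o1" b] z' a assms by auto
      qed }
    moreover
    { assume "a = b \<or> lt b a" then have ?thesis using less_succ_iff a assms by auto }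
    ultimately show ?thesis using IH by auto
  qed
qed (use assms in \<open>auto\<close>)

lemma le_add_right: "a \<in> C \<Longrightarrow> b \<in> C \<Longrightarrow> le a (add a b)"
  unfolding le_def by auto

lemma le_add_left: "a \<in> C \<Longrightarrow> b \<in> C \<Longrightarrow> le b (add a b)"
  unfolding le_def using add_comm by (auto intro!: bexI[of _ a])

lemma le_trans: "a \<in> C \<Longrightarrow> b \<in> C \<Longrightarrow> c \<in> C \<Longrightarrow> le a b \<Longrightarrow> le b c \<Longrightarrow> le a c"
  unfolding le_def by (metis add_in_C add_assoc)

lemma zero_le: "a \<in> C \<Longrightarrow> le z0 a"
  unfolding le_def by auto

lemma le_mul_nonzero:
  assumes "a \<in> C" "b \<in> C" "b \<noteq> z0"
  shows "le a (mul a b)"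
proof -
  obtain b' where "b' \<in> C" "b = add b' o1" using nonzero_is_succ assms by auto
  then show ?thesis using assms mul_succ le_add_left[of "mul a b'" a] by simp
qed

lemma add_eq_zero: "a \<in> C \<Longrightarrow> b \<in> C \<Longrightarrow> add a b = z0 \<Longrightarrow> b = z0"
  using nonzero_is_succ[of b] add_succ succ_ne_zero by force

abbreviation "pair \<equiv> pair_code M"

lemma pair_in_C [simp]: "a \<in> C \<Longrightarrow> b \<in> C \<Longrightarrow> pair a b \<in> C"
  unfolding pair_code_def by simp

lemma le_pair_fst: "a \<in> C \<Longrightarrow> b \<in> C \<Longrightarrow> le a (pair a b)"
  unfolding pair_code_def using le_add_left by simp

lemma le_pair_snd:
  assumes "a \<in> C" "b \<in> C"
  shows "le b (pair a b)"
proof (cases "add a b = z0")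
  case True
  then have "b = z0" using add_eq_zero[OF assms] by blast
  then show ?thesis using zero_le assms by simp
next
  case False
  have "le b (add a b)" using le_add_left assms by auto
  moreover have "le (add a b) (mul (add a b) (add a b))" using le_mul_nonzero False assms by auto
  moreover have "le (mul (add a b) (add a b)) (pair a b)"
    unfolding pair_code_def using le_add_right assms by auto
  ultimately have "le b (mul (add a b) (add a b))"
    using le_trans[of b "add a b" "mul (add a b) (add a b)"] assms by (meson add_in_C mul_in_C)
  then show ?thesis using le_trans[of b "mul (add a b) (add a b)" "pair a b"] assms
    \<open>le (mul (add a b) (add a b)) (pair a b)\<close> by (meson add_in_C mul_in_C pair_in_C)
qed

lemma square_sum_succ:
  assumes "s \<in> C" "z \<in> C"
  shows "mul (add s (add z o1)) (add s (add z o1)) = add (mul s s)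
    (add s (add (add (add (mul s z) (mul (add z o1) s)) (add (mul (add z o1) z) z)) o1))"
  using assms by (simp add: mul_add_distrib_left mul_add_distrib_right) (simp add: add_ac mul_comm)

text \<open>If a + b < c + d then the code of (c, d) is at least (a + b + 1)^2, which exceeds
  the code (a + b)^2 + a of (a, b).\<close>
lemma pair_ne_if_sum_less:
  assumes "a \<in> C" "b \<in> C" "c \<in> C" "d \<in> C" "lt (add a b) (add c d)"
  shows "pair a b \<noteq> pair c d"
proof
  assume eq: "pair a b = pair c d"
  let ?s = "add a b"
  obtain z where z: "z \<in> C" "add ?s (add z o1) = add c d" using less_iff assms by auto
  define W where "W = add (add (mul ?s z) (mul (add z o1) ?s)) (add (mul (add z o1) z) z)"
  have W: "W \<in> C" unfolding W_def using z assms by simp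
  have "pair c d = add (mul (add ?s (add z o1)) (add ?s (add z o1))) c"
    unfolding pair_code_def using z by simp
  also have "\<dots> = add (mul ?s ?s) (add ?s (add (add W o1) c))"
    using square_sum_succ[of ?s z] z assms W unfolding W_def by (simp add: add_ac)
  finally have "add (mul ?s ?s) a = add (mul ?s ?s) (add ?s (add (add W o1) c))"
    using eq unfolding pair_code_def by simp
  then have "a = add ?s (add (add W o1) c)"
    using add_left_cancel[of a "add ?s (add (add W o1) c)" "mul ?s ?s"] assms W by simp
  then have "add a z0 = add a (add (add (add b W) c) o1)" using assms W by (simp add: add_ac)
  then have "z0 = add (add (add b W) c) o1"
    using add_left_cancel[of z0 "add (add (add b W) c) o1" a] assms W by simp
  then show False using succ_ne_zero[of "add (add b W) c"] assms W by simp
qed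

lemma pair_inject:
  assumes "a \<in> C" "b \<in> C" "c \<in> C" "d \<in> C" "pair a b = pair c d"
  shows "a = c \<and> b = d"
proof -
  have "add a b = add c d"
    using less_linear[of "add a b" "add c d"] pair_ne_if_sum_less[of a b c d] pair_ne_if_sum_less[of c d a b]
      assms by auto
  then have "a = c" using assms unfolding pair_code_def by (simp add: add_left_cancel)
  then show ?thesis using \<open>add a b = add c d\<close> assms by (simp add: add_left_cancel)
qed

definition least_in :: "'a set \<Rightarrow> 'a \<Rightarrow> bool" where
  "least_in A m \<longleftrightarrow> m \<in> A \<and> (\<forall>y\<in>C. lt y m \<longrightarrow> y \<notin> A)"

lemma least_element:
  assumes "A \<in> Xs" "a \<in> A"
  shows "\<exists>m. least_in A m"
proof (rule ccontr)
  assume no_least: "\<nexists>m. least_in A m"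
  have below_not_in_A: "\<forall>y\<in>C. lt y x \<longrightarrow> y \<notin> A" if "x \<in> C" for x
  proof (rule sigma1_induct[where \<phi>="BAll 1 (Var 0) (Neg (Mem (Var 1) 0))"
        and e="\<lambda>_. z0" and x=0 and S="(\<lambda>_. C)(0 := A)" and P="\<lambda>x. \<forall>y\<in>C. lt y x \<longrightarrow> y \<notin> A"])
    fix x assume x: "x \<in> C" and IH: "\<forall>y\<in>C. lt y x \<longrightarrow> y \<notin> A"
    show "\<forall>y\<in>C. lt y (add x o1) \<longrightarrow> y \<notin> A"
    proof (intro ballI impI)
      fix y assume y: "y \<in> C" "lt y (add x o1)"
      then have "lt y x \<or> y = x" using less_succ_iff x by auto
      then show "y \<notin> A" using IH no_least x y by (auto simp: least_in_def)
    qed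
  qed (use that assms in \<open>auto intro!: delta0_sigma1\<close>)
  have "a \<in> C" using assms Xs_subset by auto
  then show False
    using below_not_in_A[of "add a o1"] less_succ_iff[of a a] assms by simp
qed

lemma least_in_unique: "least_in A m \<Longrightarrow> least_in A m' \<Longrightarrow> A \<subseteq> C \<Longrightarrow> m = m'"
  using less_linear[of m m'] by (auto simp: least_in_def)

lemma pair_mem_fun_code_iff [simp]:
  assumes "\<forall>i\<in>C. f i \<in> C" "i \<in> C" "y \<in> C"
  shows "pair i y \<in> fun_code M f \<longleftrightarrow> y = f i"
proof
  assume "pair i y \<in> fun_code M f"
  then obtain i' where "i' \<in> C" "pair i y = pair i' (f i')" unfolding fun_code_def by auto
  then show "y = f i" using pair_inject[of i y i' "f i'"] assms by auto
qed (use assms in \<open>auto simp: fun_code_def\<close>)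

lemma less_succ_pair_fst: "a \<in> C \<Longrightarrow> b \<in> C \<Longrightarrow> lt a (add (pair a b) o1)"
  using le_pair_fst le_iff_less_succ by auto

lemma less_succ_pair_snd: "a \<in> C \<Longrightarrow> b \<in> C \<Longrightarrow> lt b (add (pair a b) o1)"
  using le_pair_snd le_iff_less_succ by auto

lemma bex_pair_bounded:
  "(\<exists>i\<in>C. lt i (add p o1) \<and> (\<exists>y\<in>C. lt y (add p o1) \<and> p = pair i y \<and> P i y))
   \<longleftrightarrow> (\<exists>i\<in>C. \<exists>y\<in>C. p = pair i y \<and> P i y)"
  using less_succ_pair_fst less_succ_pair_snd by blast

lemma ball_pair_bounded:
  "(\<forall>i\<in>C. lt i (add p o1) \<longrightarrow> (\<forall>y\<in>C. lt y (add p o1) \<longrightarrow> p = pair i y \<longrightarrow> P i y))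
   \<longleftrightarrow> (\<forall>i\<in>C. \<forall>y\<in>C. p = pair i y \<longrightarrow> P i y)"
  using less_succ_pair_fst less_succ_pair_snd by blast

lemma ball_bex_pair_iff:
  "(\<forall>z\<in>C. \<exists>i\<in>C. \<exists>y\<in>C. p = pair i y \<and> Q i y z) \<longleftrightarrow> (\<exists>i\<in>C. \<exists>y\<in>C. p = pair i y \<and> (\<forall>z\<in>C. Q i y z))"
proof
  assume H: "\<forall>z\<in>C. \<exists>i\<in>C. \<exists>y\<in>C. p = pair i y \<and> Q i y z"
  then obtain i y where iy: "i \<in> C" "y \<in> C" "p = pair i y" using zero_in_C by blast
  have "Q i y z" if "z \<in> C" for z
  proof -
    obtain i' y' where "i' \<in> C" "y' \<in> C" "p = pair i' y'" "Q i' y' z" using H \<open>z \<in> C\<close> by blast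
    then show ?thesis using pair_inject[of i y i' y'] iy by auto
  qed
  then show "\<exists>i\<in>C. \<exists>y\<in>C. p = pair i y \<and> (\<forall>z\<in>C. Q i y z)" using iy by blast
qed blast

abbreviation "FS \<equiv> Fs M Xs"

lemma Fs_in_C: "g \<in> FS \<Longrightarrow> i \<in> C \<Longrightarrow> g i \<in> C"
  and Fs_fun_code: "g \<in> FS \<Longrightarrow> fun_code M g \<in> Xs"
  and Fs_restrict: "g \<in> FS \<Longrightarrow> restrict g C = g"
  by (auto simp: Fs_def PiE_def extensional_def restrict_def fun_eq_iff)

definition pair_graph :: "nat \<Rightarrow> fm \<Rightarrow> fm" where
  "pair_graph p \<theta> = BEx 0 (Plus (Var p) One) (BEx 1 (Plus (Var p) One)
     (Conj (Eq (Var p) (pair_tm (Var 0) (Var 1))) \<theta>))"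

lemma sat_pair_graph:
  assumes p: "p \<notin> fv \<theta> \<union> {0, 1, 2}" and a: "a \<in> C"
  shows "sat M Xs (e(p := a, 2 := z)) S (pair_graph p \<theta>) \<longleftrightarrow>
    (\<exists>i\<in>C. \<exists>y\<in>C. a = pair i y \<and> sat M Xs (e(0 := i, 1 := y, 2 := z)) S \<theta>)"
proof -
  have "sat M Xs (e(p := a, 2 := z, 0 := i, 1 := y)) S \<theta> = sat M Xs (e(0 := i, 1 := y, 2 := z)) S \<theta>" for i y
    by (rule sat_cong) (use p in auto)
  then have "sat M Xs (e(p := a, 2 := z)) S (pair_graph p \<theta>) \<longleftrightarrow> (\<exists>i\<in>C. lt i (add a o1) \<and>
      (\<exists>y\<in>C. lt y (add a o1) \<and> a = pair i y \<and> sat M Xs (e(0 := i, 1 := y, 2 := z)) S \<theta>))"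
    using p a by (simp add: pair_graph_def)
  also have "\<dots> \<longleftrightarrow> (\<exists>i\<in>C. \<exists>y\<in>C. a = pair i y \<and> sat M Xs (e(0 := i, 1 := y, 2 := z)) S \<theta>)"
    by (rule bex_pair_bounded)
  finally show ?thesis .
qed

text \<open>The code of the graph is Delta_1 because the components of a pair code lie below it.\<close>
lemma Fs_if_delta1_graph:
  assumes g: "g \<in> C \<rightarrow>\<^sub>E C" and "delta0 \<theta>" "delta0 \<theta>'"
    and e: "\<forall>v. e v \<in> C" and S: "\<forall>j. S j \<in> Xs"
    and ex_graph: "\<And>i y. i \<in> C \<Longrightarrow> y \<in> C \<Longrightarrow>
      (\<exists>z\<in>C. sat M Xs (e(0 := i, 1 := y, 2 := z)) S \<theta>) \<longleftrightarrow> g i = y"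
    and all_graph: "\<And>i y. i \<in> C \<Longrightarrow> y \<in> C \<Longrightarrow>
      (\<forall>z\<in>C. sat M Xs (e(0 := i, 1 := y, 2 := z)) S \<theta>') \<longleftrightarrow> g i = y"
  shows "g \<in> FS"
proof -
  have gC: "\<forall>i\<in>C. g i \<in> C" using g by auto
  obtain p where p: "p \<notin> fv \<theta> \<union> fv \<theta>' \<union> {0, 1, 2}"
    using ex_new_if_finite[of "fv \<theta> \<union> fv \<theta>' \<union> {0, 1, 2}"] by auto
  have sat_ex: "sat M Xs (e(p := a)) S (Ex 2 (pair_graph p \<theta>)) \<longleftrightarrow> a \<in> fun_code M g" if "a \<in> C" for a
  proof -
    have "sat M Xs (e(p := a)) S (Ex 2 (pair_graph p \<theta>)) \<longleftrightarrow>
        (\<exists>i\<in>C. \<exists>y\<in>C. a = pair i y \<and> (\<exists>z\<in>C. sat M Xs (e(0 := i, 1 := y, 2 := z)) S \<theta>))"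
      using sat_pair_graph[of p \<theta> a] p that by auto
    then show ?thesis using ex_graph gC by (auto simp: fun_code_def)
  qed
  have sat_all: "sat M Xs (e(p := a)) S (All 2 (pair_graph p \<theta>')) \<longleftrightarrow> a \<in> fun_code M g" if "a \<in> C" for a
  proof -
    have "sat M Xs (e(p := a)) S (All 2 (pair_graph p \<theta>')) \<longleftrightarrow>
        (\<forall>z\<in>C. \<exists>i\<in>C. \<exists>y\<in>C. a = pair i y \<and> sat M Xs (e(0 := i, 1 := y, 2 := z)) S \<theta>')"
      using sat_pair_graph[of p \<theta>' a] p that by auto
    also have "\<dots> \<longleftrightarrow> (\<exists>i\<in>C. \<exists>y\<in>C. a = pair i y \<and> (\<forall>z\<in>C. sat M Xs (e(0 := i, 1 := y, 2 := z)) S \<theta>'))"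
      by (rule ball_bex_pair_iff)
    finally show ?thesis using all_graph gC by (auto simp: fun_code_def)
  qed
  have "{a\<in>C. a \<in> fun_code M g} \<in> Xs"
  proof (rule delta1_comprehension[where \<phi>="Ex 2 (pair_graph p \<theta>)" and \<psi>="All 2 (pair_graph p \<theta>')"
        and e=e and S=S and x=p])
    show "sigma (Suc 0) (Ex 2 (pair_graph p \<theta>))"
      using assms(2) by (intro sigma_ex delta0_sigma1) (simp add: pair_graph_def)
    show "pi (Suc 0) (All 2 (pair_graph p \<theta>'))"
      using assms(3) by (intro pi_all delta0_pi1) (simp add: pair_graph_def)
  qed (use e S sat_ex sat_all in auto)
  moreover have "{a\<in>C. a \<in> fun_code M g} = fun_code M g" using gC by (auto simp: fun_code_def)
  ultimately show ?thesis using g by (simp add: Fs_def)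
qed

lemma Fs_if_delta0_graph:
  assumes "g \<in> C \<rightarrow>\<^sub>E C" "delta0 \<theta>" "\<forall>v. e v \<in> C" "\<forall>j. S j \<in> Xs"
    and "\<And>i y z. i \<in> C \<Longrightarrow> y \<in> C \<Longrightarrow> z \<in> C \<Longrightarrow> sat M Xs (e(0 := i, 1 := y, 2 := z)) S \<theta> \<longleftrightarrow> g i = y"
  shows "g \<in> FS"
  using assms zero_in_C by (intro Fs_if_delta1_graph[of g \<theta> \<theta> e S]) blast+

lemma const_Fs: "a \<in> C \<Longrightarrow> (\<lambda>i\<in>C. a) \<in> FS"
  by (rule Fs_if_delta0_graph[where \<theta>="Eq (Var 1) (Var 3)" and e="(\<lambda>_. z0)(3 := a)" and S="\<lambda>_. C"]) auto

text \<open>The auxiliary graph variable is witnessed by the code of the pair (f i, g i).\<close>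
lemma binop_Fs:
  assumes f: "f \<in> FS" and g: "g \<in> FS"
    and T: "\<And>e. ev M e (T (Var 4) (Var 5)) = op (e 4) (e 5)"
    and op: "\<And>a b. a \<in> C \<Longrightarrow> b \<in> C \<Longrightarrow> op a b \<in> C"
  shows "(\<lambda>i\<in>C. op (f i) (g i)) \<in> FS"
proof -
  have fC: "\<forall>i\<in>C. f i \<in> C" and gC: "\<forall>i\<in>C. g i \<in> C" using f g Fs_in_C by auto
  define S :: "nat \<Rightarrow> 'a set" where "S = (\<lambda>_. C)(0 := fun_code M f, 1 := fun_code M g)"
  define bound where "bound = Plus (Var 2) One"
  define comps where "comps = Conj (Eq (Var 2) (pair_tm (Var 4) (Var 5)))
    (Conj (Mem (pair_tm (Var 0) (Var 4)) 0) (Mem (pair_tm (Var 0) (Var 5)) 1))"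
  define \<theta> where "\<theta> = BEx 4 bound (BEx 5 bound (Conj comps (Eq (Var 1) (T (Var 4) (Var 5)))))"
  define \<theta>' where "\<theta>' = BAll 4 bound (BAll 5 bound (Impl comps (Eq (Var 1) (T (Var 4) (Var 5)))))"
  have sat_\<theta>: "sat M Xs ((\<lambda>_. z0)(0 := i, 1 := y, 2 := z)) S \<theta> \<longleftrightarrow>
      z = pair (f i) (g i) \<and> y = op (f i) (g i)"
    and sat_\<theta>': "sat M Xs ((\<lambda>_. z0)(0 := i, 1 := y, 2 := z)) S \<theta>' \<longleftrightarrow>
      (z = pair (f i) (g i) \<longrightarrow> y = op (f i) (g i))"
    if "i \<in> C" "y \<in> C" "z \<in> C" for i y z
    using that fC gC less_succ_pair_fst less_succ_pair_snd
    by (auto simp: \<theta>_def \<theta>'_def comps_def bound_def S_def T)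
  show ?thesis
  proof (rule Fs_if_delta1_graph[where \<theta>=\<theta> and \<theta>'=\<theta>' and e="\<lambda>_. z0" and S=S])
    show "(\<lambda>i\<in>C. op (f i) (g i)) \<in> C \<rightarrow>\<^sub>E C" using fC gC op by auto
    show "delta0 \<theta>" "delta0 \<theta>'"
      by (simp_all add: \<theta>_def \<theta>'_def comps_def pair_tm_def)
    show "\<forall>j. S j \<in> Xs" using f g by (simp add: S_def Fs_fun_code)
  next
    fix i y assume "i \<in> C" "y \<in> C"
    then show "(\<exists>z\<in>C. sat M Xs ((\<lambda>_. z0)(0 := i, 1 := y, 2 := z)) S \<theta>) \<longleftrightarrow> (\<lambda>i\<in>C. op (f i) (g i)) i = y"
      and "(\<forall>z\<in>C. sat M Xs ((\<lambda>_. z0)(0 := i, 1 := y, 2 := z)) S \<theta>') \<longleftrightarrow> (\<lambda>i\<in>C. op (f i) (g i)) i = y"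
      using fC gC by (auto simp: sat_\<theta>[simplified] sat_\<theta>'[simplified])
  qed simp
qed

lemma add_Fs: "f \<in> FS \<Longrightarrow> g \<in> FS \<Longrightarrow> (\<lambda>i\<in>C. add (f i) (g i)) \<in> FS"
  by (rule binop_Fs[where T=Plus]) simp_all

lemma mul_Fs: "f \<in> FS \<Longrightarrow> g \<in> FS \<Longrightarrow> (\<lambda>i\<in>C. mul (f i) (g i)) \<in> FS"
  by (rule binop_Fs[where T=Times]) simp_all

lemma comp_Fs:
  assumes f: "f \<in> FS" and g: "g \<in> FS"
  shows "(\<lambda>i\<in>C. f (g i)) \<in> FS"
proof -
  have fC: "\<forall>i\<in>C. f i \<in> C" and gC: "\<forall>i\<in>C. g i \<in> C" using f g Fs_in_C by auto
  show ?thesis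
  proof (rule Fs_if_delta1_graph[where \<theta>="Conj (Mem (pair_tm (Var 0) (Var 2)) 1) (Mem (pair_tm (Var 2) (Var 1)) 0)"
        and \<theta>'="Impl (Mem (pair_tm (Var 0) (Var 2)) 1) (Mem (pair_tm (Var 2) (Var 1)) 0)"
        and e="\<lambda>_. z0" and S="(\<lambda>_. C)(0 := fun_code M f, 1 := fun_code M g)"])
  qed (use fC gC f g in \<open>auto simp: Fs_fun_code\<close>)
qed

definition unpair :: "'a \<Rightarrow> 'a \<times> 'a" where
  "unpair p = (if \<exists>a\<in>C. \<exists>b\<in>C. p = pair a b
     then SOME ab. fst ab \<in> C \<and> snd ab \<in> C \<and> p = pair (fst ab) (snd ab) else (z0, z0))"

lemma unpair_pair [simp]:
  assumes "a \<in> C" "b \<in> C"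
  shows "unpair (pair a b) = (a, b)"
proof -
  define ab where "ab = (SOME ab. fst ab \<in> C \<and> snd ab \<in> C \<and> pair a b = pair (fst ab) (snd ab))"
  have "\<exists>ab. fst ab \<in> C \<and> snd ab \<in> C \<and> pair a b = pair (fst ab) (snd ab)"
    using assms by (intro exI[of _ "(a, b)"]) simp
  then have "fst ab \<in> C \<and> snd ab \<in> C \<and> pair a b = pair (fst ab) (snd ab)"
    unfolding ab_def by (rule someI_ex)
  then have "ab = (a, b)" using pair_inject[of a b "fst ab" "snd ab"] assms by (simp add: prod_eq_iff)
  moreover have "unpair (pair a b) = ab" using assms by (auto simp: unpair_def ab_def)
  ultimately show ?thesis by simp
qed

lemma unpair_in_C: "unpair p \<in> C \<times> C"
proof (cases "\<exists>a\<in>C. \<exists>b\<in>C. p = pair a b")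
  case True
  then obtain a b where "a \<in> C" "b \<in> C" "p = pair a b" by blast
  then show ?thesis by simp
qed (simp add: unpair_def)

lemma unpair_component_Fs:
  fixes c :: nat
  assumes sel_var: "\<And>(e :: nat \<Rightarrow> 'a) a b. (e(4 := a, 5 := b)) c = sel (a, b)"
    and sel_C: "\<And>a b. a \<in> C \<Longrightarrow> b \<in> C \<Longrightarrow> sel (a, b) \<in> C" and sel_zero: "sel (z0, z0) = z0"
  shows "(\<lambda>p\<in>C. sel (unpair p)) \<in> FS"
proof -
  define bound where "bound = Plus (Var 0) One"
  define is_pair where "is_pair = Eq (Var 0) (pair_tm (Var 4) (Var 5))"
  define \<theta> where "\<theta> = Conj (BAll 4 bound (BAll 5 bound (Impl is_pair (Eq (Var 1) (Var c)))))
    (Impl (Neg (BEx 4 bound (BEx 5 bound is_pair))) (Eq (Var 1) Zero))"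
  show ?thesis
  proof (rule Fs_if_delta0_graph[where \<theta>=\<theta> and e="\<lambda>_. z0" and S="\<lambda>_. C"])
    fix p y z assume pyz: "p \<in> C" "y \<in> C" "z \<in> C"
    have "sat M Xs ((\<lambda>_. z0)(0 := p, 1 := y, 2 := z)) (\<lambda>_. C) \<theta> \<longleftrightarrow>
        (\<forall>a\<in>C. \<forall>b\<in>C. p = pair a b \<longrightarrow> y = sel (a, b)) \<and> (\<not> (\<exists>a\<in>C. \<exists>b\<in>C. p = pair a b) \<longrightarrow> y = z0)"
      using ball_pair_bounded[of p "\<lambda>_ _. False"] ball_pair_bounded[of p "\<lambda>a b. y = sel (a, b)"] sel_var
      by (simp add: \<theta>_def bound_def is_pair_def del: fun_upd_apply) (simp add: fun_upd_twist)
    also have "\<dots> \<longleftrightarrow> (\<lambda>p\<in>C. sel (unpair p)) p = y"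
    proof (cases "\<exists>a\<in>C. \<exists>b\<in>C. p = pair a b")
      case True
      then obtain a b where ab: "a \<in> C" "b \<in> C" "p = pair a b" by blast
      have "(\<forall>a'\<in>C. \<forall>b'\<in>C. p = pair a' b' \<longrightarrow> y = sel (a', b')) \<longleftrightarrow> y = sel (a, b)"
        using ab pair_inject[of a b] by metis
      then show ?thesis using True ab pyz by auto
    next
      case False
      then have "unpair p = (z0, z0)" by (simp add: unpair_def)
      then show ?thesis using False pyz sel_zero by auto
    qed
    finally show "sat M Xs ((\<lambda>_. z0)(0 := p, 1 := y, 2 := z)) (\<lambda>_. C) \<theta> \<longleftrightarrow> (\<lambda>p\<in>C. sel (unpair p)) p = y" .
  next
    have "sel (unpair p) \<in> C" for p
      using unpair_in_C[of p] sel_C[of "fst (unpair p)" "snd (unpair p)"] by (simp add: mem_Times_iff)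
    then show "(\<lambda>p\<in>C. sel (unpair p)) \<in> C \<rightarrow>\<^sub>E C" by auto
  qed (simp_all add: \<theta>_def bound_def is_pair_def)
qed

lemma fst_unpair_Fs: "(\<lambda>p\<in>C. fst (unpair p)) \<in> FS"
  by (rule unpair_component_Fs[of 4]) simp_all

lemma snd_unpair_Fs: "(\<lambda>p\<in>C. snd (unpair p)) \<in> FS"
  by (rule unpair_component_Fs[of 5]) simp_all

lemma fun_upd_at: "(\<lambda>v. (F(x := g)) v i) = (\<lambda>v. F v i)(x := g i)"
  by auto

lemma upd_Fs_env: "\<forall>v. F v \<in> FS \<Longrightarrow> g \<in> FS \<Longrightarrow> \<forall>v. (F(x := g)) v \<in> FS"
  by simp

lemma comp_fst_unpair_Fs: "f \<in> FS \<Longrightarrow> (\<lambda>p\<in>C. f (fst (unpair p))) \<in> FS"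
  using comp_Fs[OF _ fst_unpair_Fs, of f] by (simp add: restrict_def cong: if_cong)

definition term_fun :: "(nat \<Rightarrow> 'a \<Rightarrow> 'a) \<Rightarrow> trm \<Rightarrow> 'a \<Rightarrow> 'a" where
  "term_fun F t = (\<lambda>i\<in>C. ev M (\<lambda>v. F v i) t)"

lemma term_fun_simps:
  "\<forall>v. F v \<in> FS \<Longrightarrow> term_fun F (Var v) = F v"
  "term_fun F Zero = (\<lambda>i\<in>C. z0)"
  "term_fun F One = (\<lambda>i\<in>C. o1)"
  "term_fun F (Plus s t) = (\<lambda>i\<in>C. add (term_fun F s i) (term_fun F t i))"
  "term_fun F (Times s t) = (\<lambda>i\<in>C. mul (term_fun F s i) (term_fun F t i))"
  by (auto simp: term_fun_def Fs_restrict intro!: restrict_ext)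

lemma term_fun_Fs:
  assumes "\<forall>v. F v \<in> FS"
  shows "term_fun F t \<in> FS"
proof (induction t)
  case (Plus s t)
  show ?case
    unfolding term_fun_simps(4)
    by (rule binop_Fs[where T=Plus and op=add and f="term_fun F s" and g="term_fun F t"]) (use Plus in simp_all)
next
  case (Times s t)
  show ?case
    unfolding term_fun_simps(5)
    by (rule binop_Fs[where T=Times and op=mul and f="term_fun F s" and g="term_fun F t"]) (use Times in simp_all)
next
  case (Var v)
  show ?case using term_fun_simps(1)[OF assms] assms by simp
next
  case Zero
  show ?case unfolding term_fun_simps(2) by (rule const_Fs) simp
next
  case One
  show ?case unfolding term_fun_simps(3) by (rule const_Fs) simp
qed

lemma preimage_in_Xs:
  assumes h: "h \<in> FS" and A: "A \<in> Xs"
  shows "{i\<in>C. h i \<in> A} \<in> Xs"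
proof (rule delta1_comprehension[where \<phi>="Ex 1 (Conj (Mem (pair_tm (Var 0) (Var 1)) 0) (Mem (Var 1) 1))"
      and \<psi>="All 1 (Impl (Mem (pair_tm (Var 0) (Var 1)) 0) (Mem (Var 1) 1))"
      and e="\<lambda>_. z0" and x=0 and S="(\<lambda>_. C)(0 := fun_code M h, 1 := A)"])
  show "sigma (Suc 0) (Ex 1 (Conj (Mem (pair_tm (Var 0) (Var 1)) 0) (Mem (Var 1) 1)))"
    by (intro sigma_ex delta0_sigma1) simp
  show "pi (Suc 0) (All 1 (Impl (Mem (pair_tm (Var 0) (Var 1)) 0) (Mem (Var 1) 1)))"
    by (intro pi_all delta0_pi1) simp
qed (use h A Fs_in_C Fs_fun_code in auto)

definition least_choice :: "'a set \<Rightarrow> 'a \<Rightarrow> 'a" where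
  "least_choice B = (\<lambda>i\<in>C. if \<exists>y\<in>C. pair i y \<in> B then THE m. least_in {y\<in>C. pair i y \<in> B} m else z0)"

lemma least_choice_least:
  assumes B: "B \<in> Xs" and i: "i \<in> C" and "\<exists>y\<in>C. pair i y \<in> B"
  shows "least_in {y\<in>C. pair i y \<in> B} (least_choice B i)"
proof -
  have "{y\<in>C. pair i y \<in> B} \<in> Xs"
    by (rule delta0_comprehension[where \<phi>="Mem (pair_tm (Var 3) (Var 0)) 0" and e="(\<lambda>_. z0)(3 := i)" and x=0
          and S="(\<lambda>_. C)(0 := B)"]) (use i B in auto)
  then obtain m where "least_in {y\<in>C. pair i y \<in> B} m" using least_element assms(3) by blast
  then have "\<exists>!m. least_in {y\<in>C. pair i y \<in> B} m" using least_in_unique by blast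
  then have "least_in {y\<in>C. pair i y \<in> B} (THE m. least_in {y\<in>C. pair i y \<in> B} m)" by (rule theI')
  then show ?thesis using i assms(3) by (simp add: least_choice_def)
qed

lemma least_choice_Fs:
  assumes B: "B \<in> Xs" and D: "{i\<in>C. \<exists>y\<in>C. pair i y \<in> B} \<in> Xs"
  shows "least_choice B \<in> FS"
proof -
  define D where "D = {i\<in>C. \<exists>y\<in>C. pair i y \<in> B}"
  define \<theta> where "\<theta> = Disj
    (Conj (Mem (Var 0) 1) (Conj (Mem (pair_tm (Var 0) (Var 1)) 0) (BAll 4 (Var 1) (Neg (Mem (pair_tm (Var 0) (Var 4)) 0)))))
    (Conj (Neg (Mem (Var 0) 1)) (Eq (Var 1) Zero))"
  show ?thesis
  proof (rule Fs_if_delta0_graph[where \<theta>=\<theta> and e="\<lambda>_. z0" and S="(\<lambda>_. C)(0 := B, 1 := D)"])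
    fix i y z assume iyz: "i \<in> C" "y \<in> C" "z \<in> C"
    have "least_in {y\<in>C. pair i y \<in> B} y \<longleftrightarrow> least_choice B i = y" if "i \<in> D"
      using that least_choice_least[OF B iyz(1)] least_in_unique[of "{y\<in>C. pair i y \<in> B}" y]
      by (auto simp: D_def)
    moreover have "least_choice B i = z0" if "i \<notin> D"
      using that iyz(1) by (simp add: D_def least_choice_def)
    ultimately show "sat M Xs ((\<lambda>_. z0)(0 := i, 1 := y, 2 := z)) ((\<lambda>_. C)(0 := B, 1 := D)) \<theta> \<longleftrightarrow>
        least_choice B i = y"
      using iyz by (auto simp: \<theta>_def least_in_def)
  next
    have "least_choice B i \<in> C" if "i \<in> C" for i
    proof (cases "\<exists>y\<in>C. pair i y \<in> B")
      case True
      then show ?thesis using least_choice_least[OF B that] by (simp add: least_in_def)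
    qed (use that in \<open>simp add: least_choice_def\<close>)
    then show "least_choice B \<in> C \<rightarrow>\<^sub>E C" by (auto simp: least_choice_def)
  qed (use B D in \<open>auto simp: \<theta>_def D_def\<close>)
qed

lemma Fs_choice:
  assumes "B \<in> Xs" and "{i\<in>C. \<exists>y\<in>C. pair i y \<in> B} \<in> Xs"
  shows "\<exists>g\<in>FS. \<forall>i\<in>C. (\<exists>y\<in>C. pair i y \<in> B) \<longrightarrow> pair i (g i) \<in> B"
  using least_choice_Fs[OF assms] least_choice_least[OF assms(1)] by (auto simp: least_in_def)

section \<open>Formulas defining sets in Xs along functions in F\<close>

definition Xs_definable :: "fm \<Rightarrow> bool" where
  "Xs_definable \<phi> \<longleftrightarrow> (\<forall>F. (\<forall>v. F v \<in> FS) \<longrightarrow> {i\<in>C. sat M Xs (\<lambda>v. F v i) (\<lambda>_. {}) \<phi>} \<in> Xs)"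

lemma Xs_definableD: "Xs_definable \<phi> \<Longrightarrow> \<forall>v. F v \<in> FS \<Longrightarrow> {i\<in>C. sat M Xs (\<lambda>v. F v i) (\<lambda>_. {}) \<phi>} \<in> Xs"
  by (simp add: Xs_definable_def)

lemma Xs_definable_cong:
  "Xs_definable \<phi> \<Longrightarrow> (\<And>e. sat M Xs e (\<lambda>_. {}) \<psi> = sat M Xs e (\<lambda>_. {}) \<phi>) \<Longrightarrow> Xs_definable \<psi>"
  by (simp add: Xs_definable_def)

lemma Xs_definable_Neg:
  assumes "Xs_definable \<phi>"
  shows "Xs_definable (Neg \<phi>)"
  unfolding Xs_definable_def
proof (intro allI impI)
  fix F :: "nat \<Rightarrow> 'a \<Rightarrow> 'a" assume "\<forall>v. F v \<in> FS"
  then have "C - {i\<in>C. sat M Xs (\<lambda>v. F v i) (\<lambda>_. {}) \<phi>} \<in> Xs"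
    using assms Diff_in_Xs Xs_definableD by blast
  moreover have "C - {i\<in>C. sat M Xs (\<lambda>v. F v i) (\<lambda>_. {}) \<phi>} = {i\<in>C. sat M Xs (\<lambda>v. F v i) (\<lambda>_. {}) (Neg \<phi>)}"
    by auto
  ultimately show "{i\<in>C. sat M Xs (\<lambda>v. F v i) (\<lambda>_. {}) (Neg \<phi>)} \<in> Xs" by simp
qed

lemma Xs_definable_Conj:
  assumes "Xs_definable \<phi>" "Xs_definable \<psi>"
  shows "Xs_definable (Conj \<phi> \<psi>)"
  unfolding Xs_definable_def
proof (intro allI impI)
  fix F :: "nat \<Rightarrow> 'a \<Rightarrow> 'a" assume "\<forall>v. F v \<in> FS"
  then have "{i\<in>C. sat M Xs (\<lambda>v. F v i) (\<lambda>_. {}) \<phi>} \<inter> {i\<in>C. sat M Xs (\<lambda>v. F v i) (\<lambda>_. {}) \<psi>} \<in> Xs"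
    using assms Int_in_Xs Xs_definableD by blast
  moreover have "{i\<in>C. sat M Xs (\<lambda>v. F v i) (\<lambda>_. {}) \<phi>} \<inter> {i\<in>C. sat M Xs (\<lambda>v. F v i) (\<lambda>_. {}) \<psi>}
      = {i\<in>C. sat M Xs (\<lambda>v. F v i) (\<lambda>_. {}) (Conj \<phi> \<psi>)}"
    by auto
  ultimately show "{i\<in>C. sat M Xs (\<lambda>v. F v i) (\<lambda>_. {}) (Conj \<phi> \<psi>)} \<in> Xs" by simp
qed

lemma Xs_definable_dual: "Xs_definable (dual \<phi>) \<Longrightarrow> Xs_definable \<phi>"
  by (rule Xs_definable_cong[OF Xs_definable_Neg]) (auto simp: sat_dual)

lemma tuple_tm_in_C: "\<forall>v\<in>set vs. e v \<in> C \<Longrightarrow> ev M e (tuple_tm vs) \<in> C"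
  by (induction vs) auto

lemma tuple_tm_inject:
  "\<forall>v\<in>set vs. e v \<in> C \<Longrightarrow> \<forall>v\<in>set vs. e' v \<in> C \<Longrightarrow>
   ev M e (tuple_tm vs) = ev M e' (tuple_tm vs) \<Longrightarrow> \<forall>v\<in>set vs. e v = e' v"
proof (induction vs)
  case (Cons x vs)
  have "ev M e (tuple_tm vs) \<in> C" "ev M e' (tuple_tm vs) \<in> C"
    using tuple_tm_in_C Cons.prems(1,2) by auto
  then have "e x = e' x \<and> ev M e (tuple_tm vs) = ev M e' (tuple_tm vs)"
    using pair_inject[of "e x" _ "e' x"] Cons.prems by simp
  moreover have "\<forall>v\<in>set vs. e v = e' v"
    using Cons.IH Cons.prems(1,2) calculation by simp
  ultimately show ?case by simp
qed simp

lemma le_tuple_tm: "\<forall>v\<in>set vs. e v \<in> C \<Longrightarrow> v \<in> set vs \<Longrightarrow> le (e v) (ev M e (tuple_tm vs))"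
proof (induction vs)
  case (Cons x vs)
  have code_C: "ev M e (tuple_tm vs) \<in> C" using tuple_tm_in_C Cons.prems by auto
  show ?case
  proof (cases "v = x")
    case True
    then show ?thesis using le_pair_fst Cons.prems code_C by simp
  next
    case False
    then have "le (e v) (ev M e (tuple_tm vs))" using Cons by simp
    moreover have "le (ev M e (tuple_tm vs)) (ev M e (tuple_tm (x # vs)))"
      using le_pair_snd Cons.prems code_C by simp
    ultimately show ?thesis using le_trans Cons.prems code_C by (meson list.set_intros(1) tuple_tm_in_C)
  qed
qed simp

lemma fst_unpair_comp_Fs: "H \<in> FS \<Longrightarrow> (\<lambda>p\<in>C. fst (unpair (H p))) \<in> FS"
  and snd_unpair_comp_Fs: "H \<in> FS \<Longrightarrow> (\<lambda>p\<in>C. snd (unpair (H p))) \<in> FS"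
  using comp_Fs[OF fst_unpair_Fs, of H] comp_Fs[OF snd_unpair_Fs, of H] Fs_in_C[of H]
  by (simp_all add: restrict_def cong: if_cong)

fun decode_env :: "nat list \<Rightarrow> 'a \<Rightarrow> (nat \<Rightarrow> 'a) \<Rightarrow> nat \<Rightarrow> 'a" where
  "decode_env [] q e = e"
| "decode_env (y # ys) q e = (decode_env ys (snd (unpair q)) e)(y := fst (unpair q))"

lemma decode_env_outside: "v \<notin> set ys \<Longrightarrow> decode_env ys q e v = e v"
  by (induction ys arbitrary: q) auto

lemma decode_env_tuple_tm:
  "\<forall>v\<in>set ys. e' v \<in> C \<Longrightarrow> v \<in> set ys \<Longrightarrow> decode_env ys (ev M e' (tuple_tm ys)) e v = e' v"
proof (induction ys)
  case (Cons y ys)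
  have "ev M e' (tuple_tm ys) \<in> C" "e' y \<in> C" using tuple_tm_in_C Cons.prems(1) by auto
  then show ?case using Cons by (cases "v = y") auto
qed simp

lemma decode_env_Fs:
  assumes E: "\<forall>w. (\<lambda>p\<in>C. E p w) \<in> FS"
  shows "H \<in> FS \<Longrightarrow> (\<lambda>p\<in>C. decode_env ys (H p) (E p) v) \<in> FS"
proof (induction ys arbitrary: H)
  case Nil
  show ?case using E[rule_format, of v] by (simp only: decode_env.simps)
next
  case (Cons y ys)
  show ?case
  proof (cases "v = y")
    case True
    then have "(\<lambda>p\<in>C. decode_env (y # ys) (H p) (E p) v) = (\<lambda>p\<in>C. fst (unpair (H p)))"
      by (intro restrict_ext) simp
    then show ?thesis using fst_unpair_comp_Fs[OF Cons.prems] by (simp only:)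
  next
    case False
    then have "(\<lambda>p\<in>C. decode_env (y # ys) (H p) (E p) v) =
        (\<lambda>p\<in>C. decode_env ys ((\<lambda>p\<in>C. snd (unpair (H p))) p) (E p) v)"
      by (intro restrict_ext) simp
    then show ?thesis using Cons.IH[OF snd_unpair_comp_Fs[OF Cons.prems]] by (simp only:)
  qed
qed

definition tuple_set :: "fm \<Rightarrow> nat list \<Rightarrow> 'a set" where
  "tuple_set \<theta> vs = {q\<in>C. \<exists>e. (\<forall>v\<in>set vs. e v \<in> C) \<and> q = ev M e (tuple_tm vs) \<and> sat M Xs e (\<lambda>_. {}) \<theta>}"

lemma tuple_set_subset: "tuple_set \<theta> vs \<subseteq> C"
  by (auto simp: tuple_set_def)

text \<open>The tuple set is pulled back along the tuple code of F, which lies in FS.\<close>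
lemma Xs_definable_if_tuple_set:
  assumes fv: "fv \<theta> \<subseteq> set vs" and A: "tuple_set \<theta> vs \<in> Xs"
  shows "Xs_definable \<theta>"
  unfolding Xs_definable_def
proof (intro allI impI)
  fix F :: "nat \<Rightarrow> 'a \<Rightarrow> 'a" assume F: "\<forall>v. F v \<in> FS"
  define h where "h = term_fun F (tuple_tm vs)"
  have "{i\<in>C. h i \<in> tuple_set \<theta> vs} \<in> Xs"
    using preimage_in_Xs term_fun_Fs F A by (simp add: h_def)
  moreover have "h i \<in> tuple_set \<theta> vs \<longleftrightarrow> sat M Xs (\<lambda>v. F v i) (\<lambda>_. {}) \<theta>" if i: "i \<in> C" for i
  proof
    assume "h i \<in> tuple_set \<theta> vs"
    then obtain e where e: "\<forall>v\<in>set vs. e v \<in> C" "h i = ev M e (tuple_tm vs)" "sat M Xs e (\<lambda>_. {}) \<theta>"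
      by (auto simp: tuple_set_def)
    have "\<forall>v\<in>set vs. e v = F v i"
      using tuple_tm_inject[of vs e "\<lambda>v. F v i"] e F i Fs_in_C by (auto simp: h_def term_fun_def)
    then have "sat M Xs e (\<lambda>_. {}) \<theta> = sat M Xs (\<lambda>v. F v i) (\<lambda>_. {}) \<theta>"
      using fv by (intro sat_cong) auto
    then show "sat M Xs (\<lambda>v. F v i) (\<lambda>_. {}) \<theta>" using e(3) by simp
  next
    assume "sat M Xs (\<lambda>v. F v i) (\<lambda>_. {}) \<theta>"
    moreover have "h i = ev M (\<lambda>v. F v i) (tuple_tm vs)" using i by (simp add: h_def term_fun_def)
    moreover have "\<forall>v\<in>set vs. F v i \<in> C" using F i Fs_in_C by auto
    ultimately show "h i \<in> tuple_set \<theta> vs"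
      using tuple_tm_in_C[of vs "\<lambda>v. F v i"] unfolding tuple_set_def by (auto intro!: exI[of _ "\<lambda>v. F v i"])
  qed
  ultimately show "{i\<in>C. sat M Xs (\<lambda>v. F v i) (\<lambda>_. {}) \<theta>} \<in> Xs"
    by (metis (no_types, lifting) Collect_cong)
qed

lemma sat_exblock_tuple:
  assumes Q: "Q \<notin> set vs" and fv: "fv \<theta> \<subseteq> set vs" and fo: "first_order \<theta>" and q: "q \<in> C"
  shows "sat M Xs ((\<lambda>_. z0)(Q := q)) S (exblock vs (Conj (Eq (Var Q) (tuple_tm vs)) \<theta>))
    \<longleftrightarrow> q \<in> tuple_set \<theta> vs"
proof
  assume "sat M Xs ((\<lambda>_. z0)(Q := q)) S (exblock vs (Conj (Eq (Var Q) (tuple_tm vs)) \<theta>))"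
  then obtain e where e: "\<forall>v\<in>set vs. e v \<in> C" "\<forall>v. v \<notin> set vs \<longrightarrow> e v = ((\<lambda>_. z0)(Q := q)) v"
    "e Q = ev M e (tuple_tm vs)" "sat M Xs e S \<theta>"
    by (auto simp: sat_exblock)
  have "q = ev M e (tuple_tm vs)" using e(2,3) Q by simp
  moreover have "sat M Xs e (\<lambda>_. {}) \<theta>" using e(4) sat_first_order_sets[OF fo] by blast
  ultimately show "q \<in> tuple_set \<theta> vs"
    using e(1) q unfolding tuple_set_def by blast
next
  assume "q \<in> tuple_set \<theta> vs"
  then obtain e where e: "\<forall>v\<in>set vs. e v \<in> C" "q = ev M e (tuple_tm vs)" "sat M Xs e (\<lambda>_. {}) \<theta>"
    by (auto simp: tuple_set_def)
  define e' where "e' v = (if v \<in> set vs then e v else ((\<lambda>_. z0)(Q := q)) v)" for v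
  have "ev M e' (tuple_tm vs) = ev M e (tuple_tm vs)"
    by (rule ev_cong) (auto simp: e'_def)
  moreover have "sat M Xs e' S \<theta> = sat M Xs e S \<theta>"
    by (rule sat_cong) (use fv in \<open>auto simp: e'_def\<close>)
  moreover have "\<dots> = sat M Xs e (\<lambda>_. {}) \<theta>"
    by (rule sat_first_order_sets[OF fo])
  ultimately show "sat M Xs ((\<lambda>_. z0)(Q := q)) S (exblock vs (Conj (Eq (Var Q) (tuple_tm vs)) \<theta>))"
    using e Q unfolding sat_exblock by (intro exI[of _ e']) (auto simp: e'_def)
qed

lemma sat_bexblock_tuple:
  assumes Q: "Q \<notin> set vs" and q: "q \<in> C"
  shows "sat M Xs ((\<lambda>_. z0)(Q := q)) S (bexblock vs (Plus (Var Q) One) (Conj (Eq (Var Q) (tuple_tm vs)) \<theta>))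
    \<longleftrightarrow> sat M Xs ((\<lambda>_. z0)(Q := q)) S (exblock vs (Conj (Eq (Var Q) (tuple_tm vs)) \<theta>))"
proof (rule sat_bexblock_exblock)
  show "set vs \<inter> fvt (Plus (Var Q) One) = {}" using Q by simp
next
  fix e assume e: "\<forall>v\<in>set vs. e v \<in> C" "\<forall>v. v \<notin> set vs \<longrightarrow> e v = ((\<lambda>_. z0)(Q := q)) v"
    "sat M Xs e S (Conj (Eq (Var Q) (tuple_tm vs)) \<theta>)"
  then have "e Q = q" "q = ev M e (tuple_tm vs)" using Q by auto
  then show "\<forall>v\<in>set vs. lt (e v) (ev M ((\<lambda>_. z0)(Q := q)) (Plus (Var Q) One))"
    using e(1) le_tuple_tm[of vs e] tuple_tm_in_C[of vs e] le_iff_less_succ by auto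
qed

lemma Xs_definable_delta0:
  assumes "delta0 \<theta>" "first_order \<theta>"
  shows "Xs_definable \<theta>"
proof -
  obtain vs where vs: "set vs = fv \<theta>" using finite_list[OF finite_fv] by blast
  obtain Q where Q: "Q \<notin> set vs" using ex_new_if_finite[of "set vs"] by auto
  define \<Psi> where "\<Psi> = bexblock vs (Plus (Var Q) One) (Conj (Eq (Var Q) (tuple_tm vs)) \<theta>)"
  have "{q\<in>C. sat M Xs ((\<lambda>_. z0)(Q := q)) (\<lambda>_. C) \<Psi>} \<in> Xs"
    by (rule delta0_comprehension[where \<phi>=\<Psi> and e="\<lambda>_. z0" and S="\<lambda>_. C" and x=Q])
      (use assms(1) in \<open>simp_all add: \<Psi>_def delta0_bexblock\<close>)
  moreover have "sat M Xs ((\<lambda>_. z0)(Q := q)) (\<lambda>_. C) \<Psi> \<longleftrightarrow> q \<in> tuple_set \<theta> vs" if "q \<in> C" for q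
    using sat_bexblock_tuple[OF Q that] sat_exblock_tuple[OF Q _ assms(2) that] vs by (simp add: \<Psi>_def)
  then have "{q\<in>C. sat M Xs ((\<lambda>_. z0)(Q := q)) (\<lambda>_. C) \<Psi>} = tuple_set \<theta> vs"
    using tuple_set_subset by blast
  ultimately have "tuple_set \<theta> vs \<in> Xs" by simp
  then show ?thesis using vs by (intro Xs_definable_if_tuple_set) auto
qed

lemma eq_set_in_Xs: "f \<in> FS \<Longrightarrow> g \<in> FS \<Longrightarrow> {i\<in>C. f i = g i} \<in> Xs"
  and less_set_in_Xs: "f \<in> FS \<Longrightarrow> g \<in> FS \<Longrightarrow> {i\<in>C. lt (f i) (g i)} \<in> Xs"
  using Xs_definableD[OF Xs_definable_delta0, of "Eq (Var 0) (Var 1)" "\<lambda>v. if v = 0 then f else g"]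
    Xs_definableD[OF Xs_definable_delta0, of "Lt (Var 0) (Var 1)" "\<lambda>v. if v = 0 then f else g"]
  by simp_all

lemma less_at_pairs_in_Xs:
  assumes "h \<in> FS"
  shows "{p\<in>C. lt (snd (unpair p)) (h (fst (unpair p)))} \<in> Xs"
proof -
  have "{p\<in>C. lt ((\<lambda>p\<in>C. snd (unpair p)) p) ((\<lambda>p\<in>C. h (fst (unpair p))) p)} \<in> Xs"
    by (rule less_set_in_Xs[OF snd_unpair_Fs comp_fst_unpair_Fs[OF assms]])
  moreover have "{p\<in>C. lt ((\<lambda>p\<in>C. snd (unpair p)) p) ((\<lambda>p\<in>C. h (fst (unpair p))) p)} =
      {p\<in>C. lt (snd (unpair p)) (h (fst (unpair p)))}"
    by auto
  ultimately show ?thesis by simp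
qed

lemma allblock_counterexample:
  assumes "\<not> sat M Xs e S (allblock ys \<chi>)"
  shows "\<exists>q\<in>C. \<not> sat M Xs (decode_env ys q e) S \<chi>"
proof -
  obtain e' where e': "\<forall>v\<in>set ys. e' v \<in> C" "\<forall>v. v \<notin> set ys \<longrightarrow> e' v = e v" "\<not> sat M Xs e' S \<chi>"
    using assms unfolding sat_allblock by auto
  define q where "q = ev M e' (tuple_tm ys)"
  have "decode_env ys q e v = e' v" for v
    using decode_env_tuple_tm[OF e'(1)] decode_env_outside e'(2) by (cases "v \<in> set ys") (auto simp: q_def)
  then have "decode_env ys q e = e'" ..
  moreover have "q \<in> C" using tuple_tm_in_C e'(1) by (simp add: q_def)
  ultimately show ?thesis using e'(3) by auto
qed

lemma Xs_definable_at_pairs: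
  assumes "Xs_definable \<phi>" and F: "\<forall>v. F v \<in> FS"
  shows "{p\<in>C. sat M Xs ((\<lambda>v. F v (fst (unpair p)))(x := snd (unpair p))) (\<lambda>_. {}) \<phi>} \<in> Xs"
proof -
  define G where "G v = (if v = x then (\<lambda>p\<in>C. snd (unpair p)) else (\<lambda>p\<in>C. F v (fst (unpair p))))" for v
  have "\<forall>v. G v \<in> FS" using F comp_fst_unpair_Fs snd_unpair_Fs by (simp add: G_def)
  then have "{p\<in>C. sat M Xs (\<lambda>v. G v p) (\<lambda>_. {}) \<phi>} \<in> Xs"
    by (rule Xs_definableD[OF assms(1)])
  moreover have "(\<lambda>v. G v p) = (\<lambda>v. F v (fst (unpair p)))(x := snd (unpair p))" if "p \<in> C" for p
    using that by (auto simp: G_def)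
  then have "{p\<in>C. sat M Xs (\<lambda>v. G v p) (\<lambda>_. {}) \<phi>} =
      {p\<in>C. sat M Xs ((\<lambda>v. F v (fst (unpair p)))(x := snd (unpair p))) (\<lambda>_. {}) \<phi>}"
    by auto
  ultimately show ?thesis by simp
qed

lemma Xs_definable_at_decoded_pairs:
  assumes "Xs_definable \<chi>" and F: "\<forall>v. F v \<in> FS"
  shows "{p\<in>C. sat M Xs (decode_env ys (snd (unpair p)) (\<lambda>v. F v (fst (unpair p)))) (\<lambda>_. {}) \<chi>} \<in> Xs"
proof -
  define P where "P v = (\<lambda>p\<in>C. decode_env ys ((\<lambda>p\<in>C. snd (unpair p)) p) (\<lambda>w. F w (fst (unpair p))) v)" for v
  have "\<forall>v. P v \<in> FS"
    using decode_env_Fs[of "\<lambda>p w. F w (fst (unpair p))", OF _ snd_unpair_Fs] F comp_fst_unpair_Fs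
    by (simp add: P_def)
  then have "{p\<in>C. sat M Xs (\<lambda>v. P v p) (\<lambda>_. {}) \<chi>} \<in> Xs"
    by (rule Xs_definableD[OF assms(1)])
  moreover have "{p\<in>C. sat M Xs (\<lambda>v. P v p) (\<lambda>_. {}) \<chi>} =
      {p\<in>C. sat M Xs (decode_env ys (snd (unpair p)) (\<lambda>v. F v (fst (unpair p)))) (\<lambda>_. {}) \<chi>}"
    by (auto simp: P_def)
  ultimately show ?thesis by simp
qed

end

locale sigma_comp_model = rca0_model +
  fixes n :: nat
  assumes sigma_comp: "sigma_comp M Xs n"
begin

lemma Xs_definable_sigma_n:
  assumes "sigma n \<theta>" "first_order \<theta>" "n \<noteq> 0"
  shows "Xs_definable \<theta>"
proof -
  obtain vs where vs: "set vs = fv \<theta>" using finite_list[OF finite_fv] by blast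
  obtain Q where Q: "Q \<notin> set vs \<union> prefix_vars \<theta>"
    using ex_new_if_finite[of "set vs \<union> prefix_vars \<theta>"] by auto
  define d where "d = Eq (Var Q) (tuple_tm vs)"
  define \<Psi> where "\<Psi> = exblock vs (push_conj d \<theta>)"
  have "sigma n \<Psi>"
    using assms(1,3) push_conj_sigma_pi(1)[OF assms(1)] sigma_exblock[of "n - 1"]
    by (simp add: \<Psi>_def d_def)
  moreover have "first_order \<Psi>"
    using assms(2) by (simp add: \<Psi>_def d_def first_order_push_conj)
  ultimately have "{q\<in>C. sat M Xs ((\<lambda>_. z0)(Q := q)) (\<lambda>_. {}) \<Psi>} \<in> Xs"
    using sigma_comp unfolding sigma_comp_def by auto
  moreover have "sat M Xs ((\<lambda>_. z0)(Q := q)) (\<lambda>_. {}) \<Psi> \<longleftrightarrow> q \<in> tuple_set \<theta> vs" if "q \<in> C" for q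
  proof -
    have "fv d \<inter> prefix_vars \<theta> = {}"
      using Q vs prefix_vars_fv_disjoint[of \<theta>] by (auto simp: d_def)
    moreover have "C \<noteq> {}" using zero_in_C by blast
    ultimately have "sat M Xs e (\<lambda>_. {}) (push_conj d \<theta>) = sat M Xs e (\<lambda>_. {}) (Conj d \<theta>)" for e
      using sat_push_conj by simp
    then have "sat M Xs ((\<lambda>_. z0)(Q := q)) (\<lambda>_. {}) \<Psi> \<longleftrightarrow>
        sat M Xs ((\<lambda>_. z0)(Q := q)) (\<lambda>_. {}) (exblock vs (Conj d \<theta>))"
      by (simp add: \<Psi>_def sat_exblock)
    also have "\<dots> \<longleftrightarrow> q \<in> tuple_set \<theta> vs"
      using sat_exblock_tuple[of Q vs \<theta> q] Q vs assms(2) that by (simp add: d_def)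
    finally show ?thesis .
  qed
  then have "{q\<in>C. sat M Xs ((\<lambda>_. z0)(Q := q)) (\<lambda>_. {}) \<Psi>} = tuple_set \<theta> vs"
    using tuple_set_subset by blast
  ultimately have "tuple_set \<theta> vs \<in> Xs" by simp
  then show ?thesis using vs by (intro Xs_definable_if_tuple_set) auto
qed

lemma Xs_definable_sigma:
  assumes "sigma k \<theta>" "k \<le> n" "first_order \<theta>"
  shows "Xs_definable \<theta>"
proof (cases "k = 0")
  case True
  then show ?thesis using assms sigma0_delta0 Xs_definable_delta0 by auto
next
  case False
  then show ?thesis using assms sigma_mono Xs_definable_sigma_n by auto
qed

lemma Xs_definable_pi:
  assumes "pi k \<theta>" "k \<le> n" "first_order \<theta>"
  shows "Xs_definable \<theta>"
  using Xs_definable_dual Xs_definable_sigma[OF dual_sigma_pi(2)[OF assms(1)] assms(2)] assms(3) by simp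

end

section \<open>Los's theorem for the restricted ultrapower\<close>

locale restricted_ultrapower = rca0_model +
  fixes U :: "'a set set"
  assumes ultrafilter: "ultrafilter_on M Xs U"
begin

abbreviation "Ult \<equiv> ultrapower M Xs U"
abbreviation "cls \<equiv> ucls M Xs U"

lemma U_subset_Xs: "A \<in> U \<Longrightarrow> A \<in> Xs"
  and C_in_U [simp]: "C \<in> U"
  and empty_notin_U [simp]: "{} \<notin> U"
  and U_Int: "A \<in> U \<Longrightarrow> B \<in> U \<Longrightarrow> A \<inter> B \<in> U"
  and U_mono: "A \<in> U \<Longrightarrow> B \<in> Xs \<Longrightarrow> A \<subseteq> B \<Longrightarrow> B \<in> U"
  and U_ultra: "A \<in> Xs \<Longrightarrow> A \<in> U \<or> C - A \<in> U"
  using ultrafilter unfolding ultrafilter_on_def by blast+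

lemma U_Diff_iff: "A \<in> Xs \<Longrightarrow> C - A \<in> U \<longleftrightarrow> A \<notin> U"
  using U_ultra U_Int[of A "C - A"] by (auto simp: Int_Diff)

lemma U_Int_iff: "A \<in> Xs \<Longrightarrow> B \<in> Xs \<Longrightarrow> A \<inter> B \<in> U \<longleftrightarrow> A \<in> U \<and> B \<in> U"
  using U_Int U_mono Int_in_Xs by blast

lemma ueq_refl: "f \<in> FS \<Longrightarrow> ueq M U f f"
  by (simp add: ueq_def)

lemma ueq_sym: "ueq M U f g \<Longrightarrow> ueq M U g f"
  by (simp add: ueq_def eq_commute)

lemma ueq_trans:
  assumes "f \<in> FS" "h \<in> FS" "ueq M U f g" "ueq M U g h"
  shows "ueq M U f h"
proof -
  have "{i\<in>C. f i = g i} \<inter> {i\<in>C. g i = h i} \<subseteq> {i\<in>C. f i = h i}" by auto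
  then show ?thesis using assms U_Int U_mono eq_set_in_Xs by (simp add: ueq_def) blast
qed

lemma cls_eq_iff: "f \<in> FS \<Longrightarrow> g \<in> FS \<Longrightarrow> cls f = cls g \<longleftrightarrow> ueq M U f g"
  unfolding ucls_def using ueq_refl ueq_sym ueq_trans by blast

lemma urep_cls: "f \<in> FS \<Longrightarrow> urep (cls f) \<in> FS \<and> ueq M U f (urep (cls f))"
  using someI[of "\<lambda>g. g \<in> cls f" f] ueq_refl by (auto simp: urep_def ucls_def)

lemma carr_Ult: "carr Ult = cls ` FS"
  by (simp add: ultrapower_def)

lemma zr_Ult: "zr Ult = cls (\<lambda>i\<in>C. z0)"
  and on_Ult: "on Ult = cls (\<lambda>i\<in>C. o1)"
  by (simp_all add: ultrapower_def)

lemma cls_binop_urep: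
  assumes f: "f \<in> FS" and g: "g \<in> FS"
    and op_Fs: "\<And>f g. f \<in> FS \<Longrightarrow> g \<in> FS \<Longrightarrow> (\<lambda>i\<in>C. op (f i) (g i)) \<in> FS"
  shows "cls (\<lambda>i\<in>C. op (urep (cls f) i) (urep (cls g) i)) = cls (\<lambda>i\<in>C. op (f i) (g i))"
proof -
  define f' g' where "f' = urep (cls f)" and "g' = urep (cls g)"
  have f': "f' \<in> FS" "ueq M U f f'" and g': "g' \<in> FS" "ueq M U g g'"
    using urep_cls f g by (auto simp: f'_def g'_def)
  have "{i\<in>C. f i = f' i} \<inter> {i\<in>C. g i = g' i} \<in> U"
    using f'(2) g'(2) U_Int by (simp add: ueq_def)
  moreover have "{i\<in>C. (\<lambda>i\<in>C. op (f' i) (g' i)) i = (\<lambda>i\<in>C. op (f i) (g i)) i} \<in> Xs"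
    using eq_set_in_Xs op_Fs f g f' g' by blast
  moreover have "{i\<in>C. f i = f' i} \<inter> {i\<in>C. g i = g' i}
      \<subseteq> {i\<in>C. (\<lambda>i\<in>C. op (f' i) (g' i)) i = (\<lambda>i\<in>C. op (f i) (g i)) i}"
    by auto
  ultimately have "ueq M U (\<lambda>i\<in>C. op (f' i) (g' i)) (\<lambda>i\<in>C. op (f i) (g i))"
    unfolding ueq_def by (rule U_mono)
  then show ?thesis using cls_eq_iff op_Fs f g f' g' by (simp add: f'_def g'_def)
qed

lemma pl_Ult: "f \<in> FS \<Longrightarrow> g \<in> FS \<Longrightarrow> pl Ult (cls f) (cls g) = cls (\<lambda>i\<in>C. add (f i) (g i))"
  using cls_binop_urep[OF _ _ add_Fs] by (simp add: ultrapower_def)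

lemma tm_Ult: "f \<in> FS \<Longrightarrow> g \<in> FS \<Longrightarrow> tm Ult (cls f) (cls g) = cls (\<lambda>i\<in>C. mul (f i) (g i))"
  using cls_binop_urep[OF _ _ mul_Fs] by (simp add: ultrapower_def)

lemma ls_Ult:
  assumes f: "f \<in> FS" and g: "g \<in> FS"
  shows "ls Ult (cls f) (cls g) \<longleftrightarrow> {i\<in>C. lt (f i) (g i)} \<in> U"
proof -
  define f' g' where "f' = urep (cls f)" and "g' = urep (cls g)"
  have f': "f' \<in> FS" "ueq M U f f'" and g': "g' \<in> FS" "ueq M U g g'"
    using urep_cls f g by (auto simp: f'_def g'_def)
  define E where "E = {i\<in>C. f i = f' i} \<inter> {i\<in>C. g i = g' i}"
  have E: "E \<in> U" using f'(2) g'(2) U_Int by (simp add: ueq_def E_def)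
  then have E_Xs: "E \<in> Xs" by (rule U_subset_Xs)
  have "{i\<in>C. lt (f' i) (g' i)} \<in> U \<longleftrightarrow> {i\<in>C. lt (f' i) (g' i)} \<inter> E \<in> U"
    using U_Int_iff[OF less_set_in_Xs[OF f'(1) g'(1)] E_Xs] E by simp
  also have "{i\<in>C. lt (f' i) (g' i)} \<inter> E = {i\<in>C. lt (f i) (g i)} \<inter> E"
    by (auto simp: E_def)
  also have "\<dots> \<in> U \<longleftrightarrow> {i\<in>C. lt (f i) (g i)} \<in> U"
    using U_Int_iff[OF less_set_in_Xs[OF f g] E_Xs] E by simp
  finally have "{i\<in>C. lt (f' i) (g' i)} \<in> U \<longleftrightarrow> {i\<in>C. lt (f i) (g i)} \<in> U" .
  then show ?thesis by (simp add: ultrapower_def f'_def g'_def)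
qed

lemma ev_Ult: "\<forall>v. F v \<in> FS \<Longrightarrow> ev Ult (\<lambda>v. cls (F v)) t = cls (term_fun F t)"
  by (induction t) (simp_all add: term_fun_simps zr_Ult on_Ult pl_Ult tm_Ult term_fun_Fs)

definition los :: "fm \<Rightarrow> bool" where
  "los \<phi> \<longleftrightarrow> (\<forall>F. (\<forall>v. F v \<in> FS) \<longrightarrow>
     (sat Ult {} (\<lambda>v. cls (F v)) (\<lambda>_. {}) \<phi> \<longleftrightarrow> {i\<in>C. sat M Xs (\<lambda>v. F v i) (\<lambda>_. {}) \<phi>} \<in> U))"

lemma losD:
  "los \<phi> \<Longrightarrow> \<forall>v. F v \<in> FS \<Longrightarrow>
   sat Ult {} (\<lambda>v. cls (F v)) (\<lambda>_. {}) \<phi> \<longleftrightarrow> {i\<in>C. sat M Xs (\<lambda>v. F v i) (\<lambda>_. {}) \<phi>} \<in> U"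
  by (simp add: los_def)

lemma los_cong:
  "los \<phi> \<Longrightarrow> (\<And>e. sat M Xs e (\<lambda>_. {}) \<psi> = sat M Xs e (\<lambda>_. {}) \<phi>)
   \<Longrightarrow> (\<And>E. sat Ult {} E (\<lambda>_. {}) \<psi> = sat Ult {} E (\<lambda>_. {}) \<phi>) \<Longrightarrow> los \<psi>"
  by (simp add: los_def)

lemma los_Eq: "los (Eq s t)"
  unfolding los_def
proof (intro allI impI)
  fix F :: "nat \<Rightarrow> 'a \<Rightarrow> 'a" assume F: "\<forall>v. F v \<in> FS"
  have "sat Ult {} (\<lambda>v. cls (F v)) (\<lambda>_. {}) (Eq s t) \<longleftrightarrow> ueq M U (term_fun F s) (term_fun F t)"
    using F by (simp add: ev_Ult cls_eq_iff term_fun_Fs)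
  also have "{i\<in>C. term_fun F s i = term_fun F t i} = {i\<in>C. sat M Xs (\<lambda>v. F v i) (\<lambda>_. {}) (Eq s t)}"
    by (auto simp: term_fun_def)
  then have "ueq M U (term_fun F s) (term_fun F t) \<longleftrightarrow> {i\<in>C. sat M Xs (\<lambda>v. F v i) (\<lambda>_. {}) (Eq s t)} \<in> U"
    by (simp add: ueq_def)
  finally show "sat Ult {} (\<lambda>v. cls (F v)) (\<lambda>_. {}) (Eq s t) \<longleftrightarrow>
      {i\<in>C. sat M Xs (\<lambda>v. F v i) (\<lambda>_. {}) (Eq s t)} \<in> U" .
qed

lemma los_Lt: "los (Lt s t)"
  unfolding los_def
proof (intro allI impI)
  fix F :: "nat \<Rightarrow> 'a \<Rightarrow> 'a" assume F: "\<forall>v. F v \<in> FS"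
  have "sat Ult {} (\<lambda>v. cls (F v)) (\<lambda>_. {}) (Lt s t) \<longleftrightarrow> {i\<in>C. lt (term_fun F s i) (term_fun F t i)} \<in> U"
    using F by (simp add: ev_Ult ls_Ult term_fun_Fs)
  also have "{i\<in>C. lt (term_fun F s i) (term_fun F t i)} = {i\<in>C. sat M Xs (\<lambda>v. F v i) (\<lambda>_. {}) (Lt s t)}"
    by (auto simp: term_fun_def)
  finally show "sat Ult {} (\<lambda>v. cls (F v)) (\<lambda>_. {}) (Lt s t) \<longleftrightarrow>
      {i\<in>C. sat M Xs (\<lambda>v. F v i) (\<lambda>_. {}) (Lt s t)} \<in> U" .
qed

lemma los_Neg:
  assumes "Xs_definable \<phi>" "los \<phi>"
  shows "los (Neg \<phi>)"
  unfolding los_def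
proof (intro allI impI)
  fix F :: "nat \<Rightarrow> 'a \<Rightarrow> 'a" assume F: "\<forall>v. F v \<in> FS"
  have "{i\<in>C. sat M Xs (\<lambda>v. F v i) (\<lambda>_. {}) (Neg \<phi>)} = C - {i\<in>C. sat M Xs (\<lambda>v. F v i) (\<lambda>_. {}) \<phi>}"
    by auto
  then show "sat Ult {} (\<lambda>v. cls (F v)) (\<lambda>_. {}) (Neg \<phi>) \<longleftrightarrow>
      {i\<in>C. sat M Xs (\<lambda>v. F v i) (\<lambda>_. {}) (Neg \<phi>)} \<in> U"
    using losD[OF assms(2) F] U_Diff_iff[OF Xs_definableD[OF assms(1) F]] by simp
qed

lemma los_Conj:
  assumes "Xs_definable \<phi>" "Xs_definable \<psi>" "los \<phi>" "los \<psi>"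
  shows "los (Conj \<phi> \<psi>)"
  unfolding los_def
proof (intro allI impI)
  fix F :: "nat \<Rightarrow> 'a \<Rightarrow> 'a" assume F: "\<forall>v. F v \<in> FS"
  have "{i\<in>C. sat M Xs (\<lambda>v. F v i) (\<lambda>_. {}) (Conj \<phi> \<psi>)} =
      {i\<in>C. sat M Xs (\<lambda>v. F v i) (\<lambda>_. {}) \<phi>} \<inter> {i\<in>C. sat M Xs (\<lambda>v. F v i) (\<lambda>_. {}) \<psi>}"
    by auto
  then show "sat Ult {} (\<lambda>v. cls (F v)) (\<lambda>_. {}) (Conj \<phi> \<psi>) \<longleftrightarrow>
      {i\<in>C. sat M Xs (\<lambda>v. F v i) (\<lambda>_. {}) (Conj \<phi> \<psi>)} \<in> U"
    using losD[OF assms(3) F] losD[OF assms(4) F]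
      U_Int_iff[OF Xs_definableD[OF assms(1) F] Xs_definableD[OF assms(2) F]] by simp
qed

text \<open>The existential step of Los's theorem.\<close>
lemma U_witness_iff:
  assumes pairs: "{p\<in>C. R (fst (unpair p)) (snd (unpair p))} \<in> Xs"
    and dom: "{i\<in>C. \<exists>y\<in>C. R i y} \<in> Xs"
    and sections: "\<And>g. g \<in> FS \<Longrightarrow> {i\<in>C. R i (g i)} \<in> Xs"
  shows "(\<exists>g\<in>FS. {i\<in>C. R i (g i)} \<in> U) \<longleftrightarrow> {i\<in>C. \<exists>y\<in>C. R i y} \<in> U"
proof
  assume "\<exists>g\<in>FS. {i\<in>C. R i (g i)} \<in> U"
  then obtain g where g: "g \<in> FS" "{i\<in>C. R i (g i)} \<in> U" by blast
  moreover have "{i\<in>C. R i (g i)} \<subseteq> {i\<in>C. \<exists>y\<in>C. R i y}" using g(1) Fs_in_C by auto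
  ultimately show "{i\<in>C. \<exists>y\<in>C. R i y} \<in> U" using U_mono dom by blast
next
  assume D: "{i\<in>C. \<exists>y\<in>C. R i y} \<in> U"
  define B where "B = {p\<in>C. R (fst (unpair p)) (snd (unpair p))}"
  have B_iff: "pair i y \<in> B \<longleftrightarrow> R i y" if "i \<in> C" "y \<in> C" for i y
    using that by (simp add: B_def)
  then have "{i\<in>C. \<exists>y\<in>C. pair i y \<in> B} = {i\<in>C. \<exists>y\<in>C. R i y}" by auto
  then obtain g where g: "g \<in> FS" "\<forall>i\<in>C. (\<exists>y\<in>C. pair i y \<in> B) \<longrightarrow> pair i (g i) \<in> B"
    using Fs_choice[of B] pairs dom by (auto simp: B_def)
  then have "{i\<in>C. \<exists>y\<in>C. R i y} \<subseteq> {i\<in>C. R i (g i)}"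
    using B_iff Fs_in_C by auto
  then show "\<exists>g\<in>FS. {i\<in>C. R i (g i)} \<in> U" using g(1) U_mono[OF D sections] by blast
qed

lemma los_Ex:
  assumes "Xs_definable \<phi>" "Xs_definable (Ex x \<phi>)" "los \<phi>"
  shows "los (Ex x \<phi>)"
  unfolding los_def
proof (intro allI impI)
  fix F :: "nat \<Rightarrow> 'a \<Rightarrow> 'a" assume F: "\<forall>v. F v \<in> FS"
  have "sat Ult {} (\<lambda>v. cls (F v)) (\<lambda>_. {}) (Ex x \<phi>) \<longleftrightarrow>
      (\<exists>g\<in>FS. sat Ult {} (\<lambda>v. cls ((F(x := g)) v)) (\<lambda>_. {}) \<phi>)"
    by (simp add: carr_Ult fun_upd_def if_distrib)
  also have "\<dots> \<longleftrightarrow> (\<exists>g\<in>FS. {i\<in>C. sat M Xs ((\<lambda>v. F v i)(x := g i)) (\<lambda>_. {}) \<phi>} \<in> U)"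
  proof (rule bex_cong[OF refl])
    fix g assume "g \<in> FS"
    show "sat Ult {} (\<lambda>v. cls ((F(x := g)) v)) (\<lambda>_. {}) \<phi> \<longleftrightarrow>
        {i\<in>C. sat M Xs ((\<lambda>v. F v i)(x := g i)) (\<lambda>_. {}) \<phi>} \<in> U"
      using losD[OF assms(3) upd_Fs_env[OF F \<open>g \<in> FS\<close>, of x]] unfolding fun_upd_at .
  qed
  also have "\<dots> \<longleftrightarrow> {i\<in>C. \<exists>y\<in>C. sat M Xs ((\<lambda>v. F v i)(x := y)) (\<lambda>_. {}) \<phi>} \<in> U"
  proof (rule U_witness_iff)
    show "{p\<in>C. sat M Xs ((\<lambda>v. F v (fst (unpair p)))(x := snd (unpair p))) (\<lambda>_. {}) \<phi>} \<in> Xs"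
      by (rule Xs_definable_at_pairs[OF assms(1) F])
    show "{i\<in>C. \<exists>y\<in>C. sat M Xs ((\<lambda>v. F v i)(x := y)) (\<lambda>_. {}) \<phi>} \<in> Xs"
      using Xs_definableD[OF assms(2) F] by simp
    show "{i\<in>C. sat M Xs ((\<lambda>v. F v i)(x := g i)) (\<lambda>_. {}) \<phi>} \<in> Xs" if "g \<in> FS" for g
      using Xs_definableD[OF assms(1) upd_Fs_env[OF F that, of x]] unfolding fun_upd_at .
  qed
  finally show "sat Ult {} (\<lambda>v. cls (F v)) (\<lambda>_. {}) (Ex x \<phi>) \<longleftrightarrow>
      {i\<in>C. sat M Xs (\<lambda>v. F v i) (\<lambda>_. {}) (Ex x \<phi>)} \<in> U"
    by simp
qed

lemma los_BEx:
  assumes "Xs_definable \<phi>" "Xs_definable (BEx x t \<phi>)" "los \<phi>"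
  shows "los (BEx x t \<phi>)"
  unfolding los_def
proof (intro allI impI)
  fix F :: "nat \<Rightarrow> 'a \<Rightarrow> 'a" assume F: "\<forall>v. F v \<in> FS"
  define h where "h = term_fun F t"
  have h: "h \<in> FS" using term_fun_Fs[OF F] by (simp add: h_def)
  define A where "A g = {i\<in>C. sat M Xs ((\<lambda>v. F v i)(x := g i)) (\<lambda>_. {}) \<phi>}" for g
  have A_Xs: "A g \<in> Xs" if "g \<in> FS" for g
    using Xs_definableD[OF assms(1) upd_Fs_env[OF F that, of x]] unfolding fun_upd_at A_def .
  have below_A: "{i\<in>C. lt (g i) (h i) \<and> sat M Xs ((\<lambda>v. F v i)(x := g i)) (\<lambda>_. {}) \<phi>}
      = {i\<in>C. lt (g i) (h i)} \<inter> A g" for g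
    by (auto simp: A_def)
  have D_eq: "{i\<in>C. \<exists>y\<in>C. lt y (h i) \<and> sat M Xs ((\<lambda>v. F v i)(x := y)) (\<lambda>_. {}) \<phi>}
      = {i\<in>C. sat M Xs (\<lambda>v. F v i) (\<lambda>_. {}) (BEx x t \<phi>)}"
    by (auto simp: h_def term_fun_def)
  have "sat Ult {} (\<lambda>v. cls (F v)) (\<lambda>_. {}) (BEx x t \<phi>) \<longleftrightarrow>
      (\<exists>g\<in>FS. ls Ult (cls g) (cls h) \<and> sat Ult {} (\<lambda>v. cls ((F(x := g)) v)) (\<lambda>_. {}) \<phi>)"
    by (simp add: carr_Ult ev_Ult[OF F] h_def fun_upd_def if_distrib)
  also have "\<dots> \<longleftrightarrow> (\<exists>g\<in>FS. {i\<in>C. lt (g i) (h i) \<and> sat M Xs ((\<lambda>v. F v i)(x := g i)) (\<lambda>_. {}) \<phi>} \<in> U)"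
  proof (rule bex_cong[OF refl])
    fix g assume g: "g \<in> FS"
    have "sat Ult {} (\<lambda>v. cls ((F(x := g)) v)) (\<lambda>_. {}) \<phi> \<longleftrightarrow> A g \<in> U"
      using losD[OF assms(3) upd_Fs_env[OF F g, of x]] unfolding fun_upd_at A_def .
    then show "ls Ult (cls g) (cls h) \<and> sat Ult {} (\<lambda>v. cls ((F(x := g)) v)) (\<lambda>_. {}) \<phi> \<longleftrightarrow>
        {i\<in>C. lt (g i) (h i) \<and> sat M Xs ((\<lambda>v. F v i)(x := g i)) (\<lambda>_. {}) \<phi>} \<in> U"
      unfolding below_A using ls_Ult[OF g h] U_Int_iff[OF less_set_in_Xs[OF g h] A_Xs[OF g]] by blast
  qed
  also have "\<dots> \<longleftrightarrow> {i\<in>C. \<exists>y\<in>C. lt y (h i) \<and> sat M Xs ((\<lambda>v. F v i)(x := y)) (\<lambda>_. {}) \<phi>} \<in> U"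
  proof (rule U_witness_iff)
    show "{p\<in>C. lt (snd (unpair p)) (h (fst (unpair p))) \<and>
        sat M Xs ((\<lambda>v. F v (fst (unpair p)))(x := snd (unpair p))) (\<lambda>_. {}) \<phi>} \<in> Xs"
      by (rule Collect_conj_in_Xs[OF less_at_pairs_in_Xs[OF h] Xs_definable_at_pairs[OF assms(1) F]])
    show "{i\<in>C. \<exists>y\<in>C. lt y (h i) \<and> sat M Xs ((\<lambda>v. F v i)(x := y)) (\<lambda>_. {}) \<phi>} \<in> Xs"
      unfolding D_eq by (rule Xs_definableD[OF assms(2) F])
    show "{i\<in>C. lt (g i) (h i) \<and> sat M Xs ((\<lambda>v. F v i)(x := g i)) (\<lambda>_. {}) \<phi>} \<in> Xs" if "g \<in> FS" for g
      using Collect_conj_in_Xs[OF less_set_in_Xs[OF that h] A_Xs[OF that, unfolded A_def]] .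
  qed
  finally show "sat Ult {} (\<lambda>v. cls (F v)) (\<lambda>_. {}) (BEx x t \<phi>) \<longleftrightarrow>
      {i\<in>C. sat M Xs (\<lambda>v. F v i) (\<lambda>_. {}) (BEx x t \<phi>)} \<in> U"
    unfolding D_eq .
qed

lemma los_All:
  assumes "Xs_definable \<phi>" "Xs_definable (All x \<phi>)" "los \<phi>"
  shows "los (All x \<phi>)"
proof -
  have "Xs_definable (Ex x (Neg \<phi>))"
    by (rule Xs_definable_cong[OF Xs_definable_Neg[OF assms(2)]]) simp
  then have "los (Neg (Ex x (Neg \<phi>)))"
    using assms by (intro los_Neg los_Ex Xs_definable_Neg)
  then show ?thesis by (rule los_cong) simp_all
qed

lemma los_BAll:
  assumes "Xs_definable \<phi>" "Xs_definable (BAll x t \<phi>)" "los \<phi>"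
  shows "los (BAll x t \<phi>)"
proof -
  have "Xs_definable (BEx x t (Neg \<phi>))"
    by (rule Xs_definable_cong[OF Xs_definable_Neg[OF assms(2)]]) simp
  then have "los (Neg (BEx x t (Neg \<phi>)))"
    using assms by (intro los_Neg los_BEx Xs_definable_Neg)
  then show ?thesis by (rule los_cong) simp_all
qed

lemma los_Disj:
  assumes "Xs_definable \<phi>" "Xs_definable \<psi>" "los \<phi>" "los \<psi>"
  shows "los (Disj \<phi> \<psi>)"
proof -
  have "los (Neg (Conj (Neg \<phi>) (Neg \<psi>)))"
    using assms by (intro los_Neg los_Conj Xs_definable_Conj Xs_definable_Neg)
  then show ?thesis by (rule los_cong) simp_all
qed

lemma los_Impl:
  assumes "Xs_definable \<phi>" "Xs_definable \<psi>" "los \<phi>" "los \<psi>"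
  shows "los (Impl \<phi> \<psi>)"
proof -
  have "los (Neg (Conj \<phi> (Neg \<psi>)))"
    using assms by (intro los_Neg los_Conj Xs_definable_Conj Xs_definable_Neg)
  then show ?thesis by (rule los_cong) simp_all
qed

lemma los_delta0: "delta0 \<phi> \<Longrightarrow> first_order \<phi> \<Longrightarrow> los \<phi>"
proof (induction \<phi>)
  case (Neg \<phi>) then show ?case using los_Neg Xs_definable_delta0 by simp
next
  case (Conj \<phi> \<psi>) then show ?case using los_Conj Xs_definable_delta0 by simp
next
  case (Disj \<phi> \<psi>) then show ?case using los_Disj Xs_definable_delta0 by simp
next
  case (Impl \<phi> \<psi>) then show ?case using los_Impl Xs_definable_delta0 by simp
next
  case (BEx x t \<phi>)
  then show ?case using los_BEx Xs_definable_delta0[of \<phi>] Xs_definable_delta0[of "BEx x t \<phi>"] by simp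
next
  case (BAll x t \<phi>)
  then show ?case using los_BAll Xs_definable_delta0[of \<phi>] Xs_definable_delta0[of "BAll x t \<phi>"] by simp
qed (simp_all add: los_Eq los_Lt)

lemma Ult_env_representatives:
  assumes "\<forall>v\<in>X. E v \<in> carr Ult" "\<forall>v. v \<notin> X \<longrightarrow> E v = cls (F v)" "\<forall>v. F v \<in> FS"
  obtains G where "\<forall>v. G v \<in> FS" "E = (\<lambda>v. cls (G v))" "\<forall>v. v \<notin> X \<longrightarrow> G v = F v"
proof -
  define G where "G v = (if v \<in> X then SOME g. g \<in> FS \<and> E v = cls g else F v)" for v
  have "G v \<in> FS \<and> E v = cls (G v)" for v
  proof (cases "v \<in> X")
    case True
    then have "\<exists>g. g \<in> FS \<and> E v = cls g" using assms(1) by (auto simp: carr_Ult)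
    then show ?thesis using True someI_ex[of "\<lambda>g. g \<in> FS \<and> E v = cls g"] by (simp add: G_def)
  qed (use assms(2,3) in \<open>simp add: G_def\<close>)
  then have "\<forall>v. G v \<in> FS" "E = (\<lambda>v. cls (G v))" by auto
  moreover have "\<forall>v. v \<notin> X \<longrightarrow> G v = F v" by (simp add: G_def)
  ultimately show ?thesis by (rule that)
qed

lemma allblock_transfer_up:
  assumes "los \<chi>" and F: "\<forall>v. F v \<in> FS"
    and everywhere: "\<forall>i\<in>C. sat M Xs (\<lambda>v. F v i) (\<lambda>_. {}) (allblock ys \<chi>)"
  shows "sat Ult {} (\<lambda>v. cls (F v)) (\<lambda>_. {}) (allblock ys \<chi>)"
  unfolding sat_allblock
proof (intro allI impI)
  fix E assume E: "\<forall>v\<in>set ys. E v \<in> carr Ult" "\<forall>v. v \<notin> set ys \<longrightarrow> E v = cls (F v)"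
  obtain G where G: "\<forall>v. G v \<in> FS" "E = (\<lambda>v. cls (G v))" "\<forall>v. v \<notin> set ys \<longrightarrow> G v = F v"
    by (rule Ult_env_representatives[OF E F])
  have "sat M Xs (\<lambda>v. G v i) (\<lambda>_. {}) \<chi>" if "i \<in> C" for i
    using everywhere that G(1,3) Fs_in_C unfolding sat_allblock by auto
  then have "{i\<in>C. sat M Xs (\<lambda>v. G v i) (\<lambda>_. {}) \<chi>} = C" by auto
  then show "sat Ult {} E (\<lambda>_. {}) \<chi>" using losD[OF assms(1) G(1)] G(2) by simp
qed

text \<open>If the block failed at every coordinate, least counterexample tuples would form
  functions in FS along which chi fails on a set in U.\<close>
lemma allblock_transfer_down:
  assumes "los \<chi>" "Xs_definable \<chi>" and F: "\<forall>v. F v \<in> FS"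
    and Ult_sat: "sat Ult {} (\<lambda>v. cls (F v)) (\<lambda>_. {}) (allblock ys \<chi>)"
  shows "\<exists>i\<in>C. sat M Xs (\<lambda>v. F v i) (\<lambda>_. {}) (allblock ys \<chi>)"
proof (rule ccontr)
  assume none: "\<not> ?thesis"
  define R where "R i q \<longleftrightarrow> \<not> sat M Xs (decode_env ys q (\<lambda>v. F v i)) (\<lambda>_. {}) \<chi>" for i q
  define G where "G H v = (\<lambda>p\<in>C. decode_env ys (H p) (\<lambda>w. F w p) v)" for H v
  have G_Fs: "\<forall>v. G H v \<in> FS" if "H \<in> FS" for H
    using decode_env_Fs[of "\<lambda>p w. F w p", OF _ that] F Fs_restrict by (simp add: G_def)
  have not_R: "{i\<in>C. R i (H i)} = C - {i\<in>C. sat M Xs (\<lambda>v. G H v i) (\<lambda>_. {}) \<chi>}" for H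
    by (auto simp: R_def G_def)
  have counterexample: "\<exists>q\<in>C. R i q" if "i \<in> C" for i
    using allblock_counterexample none that by (simp add: R_def)
  have "\<exists>g\<in>FS. {i\<in>C. R i (g i)} \<in> U"
  proof (subst U_witness_iff)
    have "C - {p\<in>C. sat M Xs (decode_env ys (snd (unpair p)) (\<lambda>v. F v (fst (unpair p)))) (\<lambda>_. {}) \<chi>}
        = {p\<in>C. R (fst (unpair p)) (snd (unpair p))}"
      by (auto simp: R_def)
    then show "{p\<in>C. R (fst (unpair p)) (snd (unpair p))} \<in> Xs"
      using Diff_in_Xs[OF Xs_definable_at_decoded_pairs[OF assms(2) F, of ys]] by simp
    have "{i\<in>C. \<exists>q\<in>C. R i q} = C" using counterexample by blast
    then show "{i\<in>C. \<exists>q\<in>C. R i q} \<in> Xs" "{i\<in>C. \<exists>q\<in>C. R i q} \<in> U" by simp_all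
    show "{i\<in>C. R i (g i)} \<in> Xs" if "g \<in> FS" for g
      unfolding not_R using Diff_in_Xs Xs_definableD[OF assms(2) G_Fs[OF that]] by blast
  qed
  then obtain g where g: "g \<in> FS" "{i\<in>C. R i (g i)} \<in> U" by blast
  have "G g v = F v" if "v \<notin> set ys" for v
    using that Fs_restrict[of "F v"] F by (simp add: G_def decode_env_outside)
  then have "sat Ult {} (\<lambda>v. cls (G g v)) (\<lambda>_. {}) \<chi>"
    using Ult_sat G_Fs[OF g(1)] unfolding sat_allblock by (auto simp: carr_Ult)
  then have "{i\<in>C. sat M Xs (\<lambda>v. G g v i) (\<lambda>_. {}) \<chi>} \<in> U"
    using losD[OF assms(1) G_Fs[OF g(1)]] by simp
  then have "{i\<in>C. sat M Xs (\<lambda>v. G g v i) (\<lambda>_. {}) \<chi>} \<inter> {i\<in>C. R i (g i)} \<in> U"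
    using g(2) U_Int by blast
  moreover have "{i\<in>C. sat M Xs (\<lambda>v. G g v i) (\<lambda>_. {}) \<chi>} \<inter> {i\<in>C. R i (g i)} = {}"
    using not_R by blast
  ultimately show False by simp
qed

end

section \<open>Sigma_(n+2)-elementarity\<close>

locale sigma_comp_ultrapower = restricted_ultrapower + sigma_comp_model
begin

lemma los_sigma_pi:
  "sigma k \<phi> \<Longrightarrow> k \<le> n \<Longrightarrow> first_order \<phi> \<Longrightarrow> los \<phi>"
  "pi k \<phi> \<Longrightarrow> k \<le> n \<Longrightarrow> first_order \<phi> \<Longrightarrow> los \<phi>"
proof (induction rule: sigma_pi.inducts)
  case (sigma_ex k \<phi> x)
  then show ?case
    using los_Ex Xs_definable_sigma[of "Suc k"] sigma_pi.sigma_ex by simp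
next
  case (pi_all k \<phi> x)
  then show ?case
    using los_All Xs_definable_pi[of "Suc k"] sigma_pi.pi_all by simp
qed (simp_all add: los_delta0)

lemma embedding_const: "uemb M Xs U \<circ> e = (\<lambda>v. cls (\<lambda>i\<in>C. e v))"
  by (simp add: uemb_def comp_def)

theorem ultrapower_sigma_SS_elementary:
  assumes "sigma (Suc (Suc n)) \<phi>" and fo: "first_order \<phi>" and e: "\<forall>v. e v \<in> C"
  shows "sat M Xs e (\<lambda>_. {}) \<phi> \<longleftrightarrow> sat Ult {} (uemb M Xs U \<circ> e) (\<lambda>_. {}) \<phi>"
proof -
  obtain xs \<psi> where \<phi>: "\<phi> = exblock xs \<psi>" and "pi (Suc n) \<psi>"
    using sigma_pi_block_form(1)[OF assms(1) refl] by blast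
  then obtain ys \<chi> where \<psi>: "\<psi> = allblock ys \<chi>" and "sigma n \<chi>"
    using sigma_pi_block_form(2)[OF _ refl] by blast
  have "first_order \<chi>" using fo by (simp add: \<phi> \<psi>)
  then have los: "los \<chi>" and definable: "Xs_definable \<chi>"
    using los_sigma_pi(1) Xs_definable_sigma \<open>sigma n \<chi>\<close> by auto
  show ?thesis
  proof
    assume "sat M Xs e (\<lambda>_. {}) \<phi>"
    then obtain e' where e': "\<forall>v\<in>set xs. e' v \<in> C" "\<forall>v. v \<notin> set xs \<longrightarrow> e' v = e v" "sat M Xs e' (\<lambda>_. {}) \<psi>"
      by (auto simp: \<phi> sat_exblock)
    define F where "F v = (\<lambda>i\<in>C. e' v)" for v
    have F: "\<forall>v. F v \<in> FS" using const_Fs e e' by (metis F_def)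
    have "sat Ult {} (\<lambda>v. cls (F v)) (\<lambda>_. {}) \<psi>"
      unfolding \<psi> by (rule allblock_transfer_up[OF los F]) (use e'(3) \<psi> in \<open>simp add: F_def\<close>)
    then show "sat Ult {} (uemb M Xs U \<circ> e) (\<lambda>_. {}) \<phi>"
      unfolding \<phi> embedding_const sat_exblock
      using e' F by (intro exI[of _ "\<lambda>v. cls (F v)"]) (auto simp: F_def carr_Ult)
  next
    assume "sat Ult {} (uemb M Xs U \<circ> e) (\<lambda>_. {}) \<phi>"
    then obtain E where E: "\<forall>v\<in>set xs. E v \<in> carr Ult" "\<forall>v. v \<notin> set xs \<longrightarrow> E v = cls (\<lambda>i\<in>C. e v)"
      and E_sat: "sat Ult {} E (\<lambda>_. {}) \<psi>"
      unfolding \<phi> embedding_const sat_exblock by blast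
    obtain G where G: "\<forall>v. G v \<in> FS" "E = (\<lambda>v. cls (G v))" "\<forall>v. v \<notin> set xs \<longrightarrow> G v = (\<lambda>i\<in>C. e v)"
      by (rule Ult_env_representatives[OF E]) (use const_Fs e in blast)
    obtain i where i: "i \<in> C" "sat M Xs (\<lambda>v. G v i) (\<lambda>_. {}) \<psi>"
      using allblock_transfer_down[OF los definable G(1)] E_sat G(2) \<psi> by blast
    then show "sat M Xs e (\<lambda>_. {}) \<phi>"
      unfolding \<phi> sat_exblock using G(1,3) Fs_in_C by (intro exI[of _ "\<lambda>v. G v i"]) auto
  qed
qed

end

theorem corollary3p7:
  fixes M :: "'a astr" and Xs :: "'a set set" and U :: "'a set set" and n :: nat
  assumes "rca0 M Xs"
    and "ultrafilter_on M Xs U"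
    and "\<forall>A\<in>U. cofinal M A"
    and "sigma_comp M Xs n"
  shows "\<forall>\<phi> e. sigma (n + 2) \<phi> \<and> first_order \<phi> \<and> (\<forall>v. e v \<in> carr M) \<longrightarrow>
           (sat M Xs e (\<lambda>_. {}) \<phi> \<longleftrightarrow>
            sat (ultrapower M Xs U) {} (uemb M Xs U \<circ> e) (\<lambda>_. {}) \<phi>)"
proof -
  have "Xs \<noteq> {}" using assms(2) by (auto simp: ultrafilter_on_def)
  then interpret sigma_comp_ultrapower M Xs U n
    using assms(1,2,4) by unfold_locales
  show ?thesis using ultrapower_sigma_SS_elementary by simp
qed

end
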